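(* In the setting of the context, $F=E_M\circ E_{M_1}$ restricts to a faithful linear functional $F:C\to k$; i.e. for $c\in C$, $F(cC)=0$ implies $c=0$.
   Context: $k$ is a field; $C_R(S)=\{r\in R:rs=sr\ \forall s\in S\}$. $N\subseteq M$ is a strongly separable, irreducible extension of $k$-algebras: $C_M(N)=k1$ and there are an $N$-bimodule map $E:M\to N$ and $x_1,\dots,x_n,y_1,\dots,y_n\in M$ with $\sum_iE(mx_i)y_i=m=\sum_ix_iE(y_im)$ for all $m\in M$, $E(1)\neq0$, $\sum_ix_iy_i\neq0$; normalized so that $E(1)=1$, whence $\sum_ix_iy_i=\lambda^{-1}1$ with $0\neq\lambda\in k$. Basic construction: given $S\subseteq R$, an $S$-bimodule map $E_S:R\to S$ with $E_S(1)=1$ and $r_i,s_i\in R$ with $\sum_iE_S(rr_i)s_i=r=\sum_ir_iE_S(s_ir)$ and $\sum_ir_is_i=\lambda^{-1}1$, set $R_1=R\otimes_SR$ with product $(a\otimes b)(c\otimes d)=aE_S(bc)\otimes d$, unit $\sum_ir_i\otimes s_i$, $R\subseteq R_1$ via $r\mapsto\sum_irr_i\otimes s_i$, $E_R:R_1\to R$, $a\otimes b\mapsto\lambda ab$; then $E_R$, $\lambda^{-1}r_i\otimes1$, $1\otimes s_i$ satisfy the same conditions with the same $\lambda$. From $(N\subseteq M,E)$ get $M_1,E_M$; from $(M\subseteq M_1,E_M)$ get $M_2,E_{M_1}$. Let $A=C_{M_1}(N)$, $B=C_{M_2}(M)$, $C=C_{M_2}(N)$. Depth 2 is assumed: $M_1$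 is free as right $M$-module with basis in $A$, $M_2$ free as right $M_1$-module with basis in $B$. For $c\in C$, $E_M(E_{M_1}(c))\in C_M(N)=k1$, identified with $k$. *)

theory Defs
  imports "HOL-Algebra.Algebra"
begin

definition kring :: "'k::field ring" where
  "kring = \<lparr>carrier = UNIV, Group.monoid.mult = (*), one = 1, ring.zero = 0, ring.add = (+)\<rparr>"

definition kalg :: "('k::field, 'a) module \<Rightarrow> bool" where
  "kalg R \<longleftrightarrow> ring R \<and> module kring R \<and>
     (\<forall>c a b. a \<in> carrier R \<longrightarrow> b \<in> carrier R \<longrightarrow>
        (c \<odot>\<^bsub>R\<^esub> a) \<otimes>\<^bsub>R\<^esub> b = c \<odot>\<^bsub>R\<^esub> (a \<otimes>\<^bsub>R\<^esub> b) \<and>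
        a \<otimes>\<^bsub>R\<^esub> (c \<odot>\<^bsub>R\<^esub> b) = c \<odot>\<^bsub>R\<^esub> (a \<otimes>\<^bsub>R\<^esub> b))"

definition subalg :: "'a set \<Rightarrow> ('k::field, 'a) module \<Rightarrow> bool" where
  "subalg S R \<longleftrightarrow> S \<subseteq> carrier R \<and> \<one>\<^bsub>R\<^esub> \<in> S \<and> \<zero>\<^bsub>R\<^esub> \<in> S \<and>
     (\<forall>a\<in>S. \<forall>b\<in>S. a \<oplus>\<^bsub>R\<^esub> b \<in> S \<and> a \<otimes>\<^bsub>R\<^esub> b \<in> S) \<and>
     (\<forall>c. \<forall>a\<in>S. c \<odot>\<^bsub>R\<^esub> a \<in> S)"

definition alg_centralizer :: "('k::field, 'a) module \<Rightarrow> 'a set \<Rightarrow> 'a set" where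
  "alg_centralizer R U = {r \<in> carrier R. \<forall>s\<in>U. r \<otimes>\<^bsub>R\<^esub> s = s \<otimes>\<^bsub>R\<^esub> r}"

definition supp :: "('b \<Rightarrow> 'k::zero) \<Rightarrow> 'b set" where
  "supp f = {p. f p \<noteq> 0}"

text \<open>Finite formal k-linear combinations of pairs of elements of R.\<close>
definition fsums :: "('k::field, 'a) module \<Rightarrow> ('a \<times> 'a \<Rightarrow> 'k) set" where
  "fsums R = {f. finite (supp f) \<and> supp f \<subseteq> carrier R \<times> carrier R}"

definition dlt :: "'a \<Rightarrow> 'a \<Rightarrow> 'a \<times> 'a \<Rightarrow> 'k::field" where
  "dlt a b = (\<lambda>p. if p = (a, b) then 1 else 0)"

text \<open>The k-subspace of relations defining \<open>R \<otimes>_S R\<close>: k-bilinearity and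
  S-balancedness.\<close>
inductive_set tens_rel :: "('k::field, 'a) module \<Rightarrow> 'a set \<Rightarrow> ('a \<times> 'a \<Rightarrow> 'k) set"
  for R S where
  zero: "(\<lambda>_. 0) \<in> tens_rel R S"
| add: "f \<in> tens_rel R S \<Longrightarrow> g \<in> tens_rel R S \<Longrightarrow> (\<lambda>p. f p + g p) \<in> tens_rel R S"
| smul: "f \<in> tens_rel R S \<Longrightarrow> (\<lambda>p. c * f p) \<in> tens_rel R S"
| addl: "a \<in> carrier R \<Longrightarrow> a' \<in> carrier R \<Longrightarrow> b \<in> carrier R \<Longrightarrow>
     (\<lambda>p. dlt (a \<oplus>\<^bsub>R\<^esub> a') b p - dlt a b p - dlt a' b p) \<in> tens_rel R S"
| addr: "a \<in> carrier R \<Longrightarrow> b \<in> carrier R \<Longrightarrow> b' \<in> carrier R \<Longrightarrow>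
     (\<lambda>p. dlt a (b \<oplus>\<^bsub>R\<^esub> b') p - dlt a b p - dlt a b' p) \<in> tens_rel R S"
| scl: "a \<in> carrier R \<Longrightarrow> b \<in> carrier R \<Longrightarrow>
     (\<lambda>p. dlt (c \<odot>\<^bsub>R\<^esub> a) b p - c * dlt a b p) \<in> tens_rel R S"
| scr: "a \<in> carrier R \<Longrightarrow> b \<in> carrier R \<Longrightarrow>
     (\<lambda>p. dlt a (c \<odot>\<^bsub>R\<^esub> b) p - c * dlt a b p) \<in> tens_rel R S"
| bal: "a \<in> carrier R \<Longrightarrow> b \<in> carrier R \<Longrightarrow> s \<in> S \<Longrightarrow>
     (\<lambda>p. dlt (a \<otimes>\<^bsub>R\<^esub> s) b p - dlt a (s \<otimes>\<^bsub>R\<^esub> b) p) \<in> tens_rel R S"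

text \<open>Equivalence class of a formal sum; elements of \<open>R \<otimes>_S R\<close> are such classes.\<close>
definition tens_class :: "('k::field, 'a) module \<Rightarrow> 'a set \<Rightarrow> ('a \<times> 'a \<Rightarrow> 'k) \<Rightarrow> ('a \<times> 'a \<Rightarrow> 'k) set" where
  "tens_class R S f = {g \<in> fsums R. (\<lambda>p. f p - g p) \<in> tens_rel R S}"

definition tens_carrier :: "('k::field, 'a) module \<Rightarrow> 'a set \<Rightarrow> ('a \<times> 'a \<Rightarrow> 'k) set set" where
  "tens_carrier R S = tens_class R S ` fsums R"

definition rep :: "'b set \<Rightarrow> 'b" where
  "rep U = (SOME f. f \<in> U)"

text \<open>Bilinear extension of \<open>(a \<otimes> b)(c \<otimes> d) = a E_S(bc) \<otimes> d\<close> to formal sums.\<close>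
definition bc_mult :: "('k::field, 'a) module \<Rightarrow> ('a \<Rightarrow> 'a) \<Rightarrow> ('a \<times> 'a \<Rightarrow> 'k) \<Rightarrow> ('a \<times> 'a \<Rightarrow> 'k) \<Rightarrow> ('a \<times> 'a \<Rightarrow> 'k)" where
  "bc_mult R ES f g = (\<lambda>t. \<Sum>p\<in>supp f. \<Sum>q\<in>supp g.
      f p * g q * dlt (fst p \<otimes>\<^bsub>R\<^esub> ES (snd p \<otimes>\<^bsub>R\<^esub> fst q)) (snd q) t)"

definition basic_constr :: "('k::field, 'a) module \<Rightarrow> 'a set \<Rightarrow> ('a \<Rightarrow> 'a) \<Rightarrow>
    (nat \<Rightarrow> 'a) \<Rightarrow> (nat \<Rightarrow> 'a) \<Rightarrow> nat \<Rightarrow> ('k, ('a \<times> 'a \<Rightarrow> 'k) set) module" where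
  "basic_constr R S ES r s n =
    \<lparr>carrier = tens_carrier R S,
     Group.monoid.mult = (\<lambda>U Y. tens_class R S (bc_mult R ES (rep U) (rep Y))),
     one = tens_class R S (\<lambda>p. \<Sum>i<n. dlt (r i) (s i) p),
     ring.zero = tens_class R S (\<lambda>_. 0),
     ring.add = (\<lambda>U Y. tens_class R S (\<lambda>p. rep U p + rep Y p)),
     smult = (\<lambda>c U. tens_class R S (\<lambda>p. c * rep U p))\<rparr>"

definition bc_incl :: "('k::field, 'a) module \<Rightarrow> 'a set \<Rightarrow> (nat \<Rightarrow> 'a) \<Rightarrow> (nat \<Rightarrow> 'a) \<Rightarrow> nat \<Rightarrow>
    'a \<Rightarrow> ('a \<times> 'a \<Rightarrow> 'k) set" where
  "bc_incl R S r s n a = tens_class R S (\<lambda>p. \<Sum>i<n. dlt (a \<otimes>\<^bsub>R\<^esub> r i) (s i) p)"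

definition bc_cond :: "('k::field, 'a) module \<Rightarrow> 'k \<Rightarrow> ('a \<times> 'a \<Rightarrow> 'k) set \<Rightarrow> 'a" where
  "bc_cond R lam U = lam \<odot>\<^bsub>R\<^esub>
     finsum R (\<lambda>p. rep U p \<odot>\<^bsub>R\<^esub> (fst p \<otimes>\<^bsub>R\<^esub> snd p)) (supp (rep U))"

definition free_right_basis :: "('k::field, 'a) module \<Rightarrow> ('k, 'b) module \<Rightarrow> ('b \<Rightarrow> 'a) \<Rightarrow> 'a set \<Rightarrow> bool" where
  "free_right_basis R S \<iota> Bs \<longleftrightarrow> Bs \<subseteq> carrier R \<and>
     (\<forall>u\<in>carrier R. \<exists>!f. f \<in> Bs \<rightarrow>\<^sub>E carrier S \<and> finite {b\<in>Bs. f b \<noteq> \<zero>\<^bsub>S\<^esub>} \<and>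
        u = finsum R (\<lambda>b. b \<otimes>\<^bsub>R\<^esub> \<iota> (f b)) {b\<in>Bs. f b \<noteq> \<zero>\<^bsub>S\<^esub>})"

end

(*
  Both conditional expectations are bimodule maps: E_M is M-bilinear on M_1 and E_{M_1} is
  M_1-bilinear on M_2. Hence for c in C = C_{M_2}(N) the element F(c) = E_M(E_{M_1}(c))
  commutes with N, so it lies in C_M(N) = k.

  E_M is faithful on M_1: the dual basis identity of M subset M_1 gives
  w = sum_i E_M(w x1_i) y1_i, so E_M(w M_1) = 0 forces w = 0, and by right M-linearity it
  suffices to test E_M(w b) = 0 for b in a right M-basis of M_1. The same holds one level up
  for E_{M_1}. Now let F(c C) = 0. For beta in the basis of M_2 taken from B and b in the basis
  of M_1 taken from A, the product beta b lies in C, so E_M(E_{M_1}(c beta) b) = F(c beta b) = 0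
  for all b; hence E_{M_1}(c beta) = 0 for all beta, hence c = 0.

  Applying this at the second level needs M subset M_1 to be strongly separable again, with
  quasi-basis x1_i = lambda^-1 x_i (x) 1, y1_i = 1 (x) y_i and the same lambda. This is checked on
  the explicit model of M_1 as finitely supported formal sums of pairs modulo the bilinearity
  and N-balancedness relations, where E_M is lambda times the multiplication map.
*)
theory Submission
  imports Defs
begin

lemma supp_dlt [simp]: "supp (dlt a b :: _ \<Rightarrow> 'k::field) = {(a, b)}"
  by (auto simp: supp_def dlt_def)

lemma dlt_mult: "dlt a b p * G = (if p = (a, b) then G else 0)"
  by (simp add: dlt_def)

lemma supp_add: "supp (\<lambda>p. F p + F' p :: 'k::field) \<subseteq> supp F \<union> supp F'"
  by (auto simp: supp_def)

lemma supp_smult: "supp (\<lambda>p. c * F p :: 'k::field) \<subseteq> supp F"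
  by (auto simp: supp_def)

lemma supp_diff: "supp (\<lambda>p. F p - F' p :: 'k::field) \<subseteq> supp F \<union> supp F'"
  by (auto simp: supp_def)

definition lin_ext :: "('b \<Rightarrow> 'k) \<Rightarrow> ('b \<Rightarrow> 'k::field) \<Rightarrow> 'k" where
  "lin_ext G F = (\<Sum>p\<in>supp F. F p * G p)"

lemma lin_ext_superset: "finite P \<Longrightarrow> supp F \<subseteq> P \<Longrightarrow> lin_ext G F = (\<Sum>p\<in>P. F p * G p)"
  unfolding lin_ext_def by (rule sum.mono_neutral_left) (auto simp: supp_def)

lemma lin_ext_add: "finite (supp F) \<Longrightarrow> finite (supp F') \<Longrightarrow>
    lin_ext G (\<lambda>p. F p + F' p) = lin_ext G F + lin_ext G F'"
  using lin_ext_superset[of "supp F \<union> supp F'" "\<lambda>p. F p + F' p" G]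
    lin_ext_superset[of "supp F \<union> supp F'" F G] lin_ext_superset[of "supp F \<union> supp F'" F' G]
    supp_add[of F F']
  by (simp add: distrib_right sum.distrib)

lemma lin_ext_diff: "finite (supp F) \<Longrightarrow> finite (supp F') \<Longrightarrow>
    lin_ext G (\<lambda>p. F p - F' p) = lin_ext G F - lin_ext G F'"
  using lin_ext_superset[of "supp F \<union> supp F'" "\<lambda>p. F p - F' p" G]
    lin_ext_superset[of "supp F \<union> supp F'" F G] lin_ext_superset[of "supp F \<union> supp F'" F' G]
    supp_diff[of F F']
  by (simp add: left_diff_distrib sum_subtractf)

lemma lin_ext_smult: "finite (supp F) \<Longrightarrow> lin_ext G (\<lambda>p. c * F p) = c * lin_ext G F"
  using lin_ext_superset[of "supp F" "\<lambda>p. c * F p" G] supp_smult[of c F]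
  by (simp add: lin_ext_def sum_distrib_left mult.assoc)

lemma lin_ext_zero [simp]: "lin_ext G (\<lambda>_. 0) = 0"
  by (simp add: lin_ext_def supp_def)

lemma lin_ext_dlt [simp]: "lin_ext G (dlt a b) = G (a, b)"
  by (simp add: lin_ext_def dlt_mult)

lemma lin_ext_dlt_diff2:
  "lin_ext G (\<lambda>p. dlt a b p - c * dlt a' b' p) = G (a, b) - c * G (a', b')"
  "lin_ext G (\<lambda>p. dlt a b p - dlt a' b' p) = G (a, b) - G (a', b')"
  by (simp_all add: lin_ext_diff lin_ext_smult finite_subset[OF supp_smult])

lemma lin_ext_dlt_diff3:
  "lin_ext G (\<lambda>p. dlt a b p - dlt a' b' p - dlt a'' b'' p) = G (a, b) - G (a', b') - G (a'', b'')"
  by (simp add: lin_ext_diff finite_subset[OF supp_diff])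

definition pair_sum :: "'i set \<Rightarrow> ('i \<Rightarrow> 'k::field) \<Rightarrow> ('i \<Rightarrow> 'a) \<Rightarrow> ('i \<Rightarrow> 'a) \<Rightarrow> 'a \<times> 'a \<Rightarrow> 'k" where
  "pair_sum I c a b = (\<lambda>p. \<Sum>i\<in>I. c i * dlt (a i) (b i) p)"

lemma supp_pair_sum: "supp (pair_sum I c a b) \<subseteq> (\<lambda>i. (a i, b i)) ` I"
  by (auto simp: supp_def pair_sum_def dlt_def intro!: sum.neutral split: if_splits)

lemma lin_ext_pair_sum:
  assumes "finite I"
  shows "lin_ext G (pair_sum I c a b) = (\<Sum>i\<in>I. c i * G (a i, b i))"
proof -
  let ?P = "(\<lambda>i. (a i, b i)) ` I"
  have "lin_ext G (pair_sum I c a b) = (\<Sum>p\<in>?P. pair_sum I c a b p * G p)"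
    using assms by (intro lin_ext_superset finite_imageI supp_pair_sum)
  also have "\<dots> = (\<Sum>p\<in>?P. \<Sum>i\<in>I. c i * (dlt (a i) (b i) p * G p))"
    by (simp only: pair_sum_def sum_distrib_right mult.assoc)
  also have "\<dots> = (\<Sum>i\<in>I. c i * (\<Sum>p\<in>?P. dlt (a i) (b i) p * G p))"
    by (subst sum.swap) (simp add: sum_distrib_left)
  also have "\<dots> = (\<Sum>i\<in>I. c i * G (a i, b i))"
    using assms by (intro sum.cong refl) (simp add: dlt_mult)
  finally show ?thesis .
qed

lemma pair_sum_supp: "finite (supp f) \<Longrightarrow> pair_sum (supp f) f fst snd = f"
proof (rule ext)
  fix p assume fin: "finite (supp f)"
  have "pair_sum (supp f) f fst snd p = (\<Sum>q\<in>supp f. if q = p then f q else 0)"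
    unfolding pair_sum_def by (intro sum.cong refl) (simp add: dlt_def)
  also have "\<dots> = f p" using fin by (simp add: supp_def)
  finally show "pair_sum (supp f) f fst snd p = f p" .
qed

lemma pair_sum_supp_expanded: "finite (supp f) \<Longrightarrow> (\<lambda>t. \<Sum>q\<in>supp f. f q * dlt (fst q) (snd q) t) = f"
  using pair_sum_supp[of f] by (simp add: pair_sum_def)

lemma pair_sum_cartesian:
  "pair_sum (I \<times> J) c a b t = (\<Sum>i\<in>I. \<Sum>j\<in>J. c (i, j) * dlt (a (i, j)) (b (i, j)) t)"
  unfolding pair_sum_def by (simp add: sum.cartesian_product)

lemma kring_simps [simp]:
  "carrier (kring :: 'k::field ring) = UNIV" "a \<oplus>\<^bsub>kring\<^esub> b = a + b"
  "a \<otimes>\<^bsub>kring\<^esub> b = a * b" "\<one>\<^bsub>kring\<^esub> = 1" "\<zero>\<^bsub>kring\<^esub> = 0"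
  by (simp_all add: kring_def)

lemma free_right_basisE:
  assumes "free_right_basis R S \<iota> Bs" "u \<in> carrier R"
  obtains f where "f \<in> Bs \<rightarrow>\<^sub>E carrier S" "finite {b\<in>Bs. f b \<noteq> \<zero>\<^bsub>S\<^esub>}"
    "u = finsum R (\<lambda>b. b \<otimes>\<^bsub>R\<^esub> \<iota> (f b)) {b\<in>Bs. f b \<noteq> \<zero>\<^bsub>S\<^esub>}"
proof -
  have "\<exists>!f. f \<in> Bs \<rightarrow>\<^sub>E carrier S \<and> finite {b\<in>Bs. f b \<noteq> \<zero>\<^bsub>S\<^esub>} \<and>
      u = finsum R (\<lambda>b. b \<otimes>\<^bsub>R\<^esub> \<iota> (f b)) {b\<in>Bs. f b \<noteq> \<zero>\<^bsub>S\<^esub>}"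
    using assms unfolding free_right_basis_def by blast
  then show ?thesis
    using that by (elim ex1E) blast
qed

locale strongly_separable_ext =
  fixes R :: "('k::field, 'a) module" and S :: "'a set" and E :: "'a \<Rightarrow> 'a"
    and r s :: "nat \<Rightarrow> 'a" and n :: nat and lam :: 'k
  assumes alg: "kalg R"
    and sub: "subalg S R"
    and E_into: "\<forall>m\<in>carrier R. E m \<in> S"
    and E_add: "\<forall>a\<in>carrier R. \<forall>b\<in>carrier R. E (a \<oplus>\<^bsub>R\<^esub> b) = E a \<oplus>\<^bsub>R\<^esub> E b"
    and E_bimod: "\<forall>a\<in>S. \<forall>m\<in>carrier R.
                    E (a \<otimes>\<^bsub>R\<^esub> m) = a \<otimes>\<^bsub>R\<^esub> E m \<and> E (m \<otimes>\<^bsub>R\<^esub> a) = E m \<otimes>\<^bsub>R\<^esub> a"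
    and rs_in: "\<forall>i<n. r i \<in> carrier R \<and> s i \<in> carrier R"
    and dual1: "\<forall>m\<in>carrier R. finsum R (\<lambda>i. E (m \<otimes>\<^bsub>R\<^esub> r i) \<otimes>\<^bsub>R\<^esub> s i) {..<n} = m"
    and dual2: "\<forall>m\<in>carrier R. finsum R (\<lambda>i. r i \<otimes>\<^bsub>R\<^esub> E (s i \<otimes>\<^bsub>R\<^esub> m)) {..<n} = m"
    and E_one: "E \<one>\<^bsub>R\<^esub> = \<one>\<^bsub>R\<^esub>"
    and lam_nz: "lam \<noteq> 0"
    and rs_sum: "finsum R (\<lambda>i. r i \<otimes>\<^bsub>R\<^esub> s i) {..<n} = inverse lam \<odot>\<^bsub>R\<^esub> \<one>\<^bsub>R\<^esub>"
begin

sublocale ringR: ring R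
  using alg by (simp add: kalg_def)

sublocale modR: module kring R
  using alg by (simp add: kalg_def)

lemma sm_closed [simp, intro]: "a \<in> carrier R \<Longrightarrow> c \<odot>\<^bsub>R\<^esub> a \<in> carrier R"
  using modR.smult_closed by simp

lemma sm_ldistr: "a \<in> carrier R \<Longrightarrow> (c + d) \<odot>\<^bsub>R\<^esub> a = c \<odot>\<^bsub>R\<^esub> a \<oplus>\<^bsub>R\<^esub> d \<odot>\<^bsub>R\<^esub> a"
  using modR.smult_l_distr[of c d a] by simp

lemma sm_rdistr:
  "a \<in> carrier R \<Longrightarrow> b \<in> carrier R \<Longrightarrow> c \<odot>\<^bsub>R\<^esub> (a \<oplus>\<^bsub>R\<^esub> b) = c \<odot>\<^bsub>R\<^esub> a \<oplus>\<^bsub>R\<^esub> c \<odot>\<^bsub>R\<^esub> b"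
  using modR.smult_r_distr[of c a b] by simp

lemma sm_assoc: "a \<in> carrier R \<Longrightarrow> (c * d) \<odot>\<^bsub>R\<^esub> a = c \<odot>\<^bsub>R\<^esub> (d \<odot>\<^bsub>R\<^esub> a)"
  using modR.smult_assoc1[of c d a] by simp

lemma sm_one [simp]: "a \<in> carrier R \<Longrightarrow> (1::'k) \<odot>\<^bsub>R\<^esub> a = a"
  using modR.smult_one[of a] by simp

lemma sm_zero [simp]: "a \<in> carrier R \<Longrightarrow> (0::'k) \<odot>\<^bsub>R\<^esub> a = \<zero>\<^bsub>R\<^esub>"
  using modR.smult_l_null[of a] by simp

lemma sm_inverse_lam: "a \<in> carrier R \<Longrightarrow> lam \<odot>\<^bsub>R\<^esub> (inverse lam \<odot>\<^bsub>R\<^esub> a) = a"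
  using lam_nz by (simp add: sm_assoc[symmetric])

lemma sm_mult_left:
  "a \<in> carrier R \<Longrightarrow> b \<in> carrier R \<Longrightarrow> (c \<odot>\<^bsub>R\<^esub> a) \<otimes>\<^bsub>R\<^esub> b = c \<odot>\<^bsub>R\<^esub> (a \<otimes>\<^bsub>R\<^esub> b)"
  using alg by (simp add: kalg_def)

lemma sm_mult_right:
  "a \<in> carrier R \<Longrightarrow> b \<in> carrier R \<Longrightarrow> a \<otimes>\<^bsub>R\<^esub> (c \<odot>\<^bsub>R\<^esub> b) = c \<odot>\<^bsub>R\<^esub> (a \<otimes>\<^bsub>R\<^esub> b)"
  using alg by (simp add: kalg_def)

lemma S_subset: "S \<subseteq> carrier R"
  using sub by (simp add: subalg_def)

lemma E_in_S: "m \<in> carrier R \<Longrightarrow> E m \<in> S"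
  using E_into by blast

lemma E_closed [simp, intro]: "m \<in> carrier R \<Longrightarrow> E m \<in> carrier R"
  using E_in_S S_subset by blast

lemma E_plus: "a \<in> carrier R \<Longrightarrow> b \<in> carrier R \<Longrightarrow> E (a \<oplus>\<^bsub>R\<^esub> b) = E a \<oplus>\<^bsub>R\<^esub> E b"
  using E_add by blast

lemma E_left: "a \<in> S \<Longrightarrow> m \<in> carrier R \<Longrightarrow> E (a \<otimes>\<^bsub>R\<^esub> m) = a \<otimes>\<^bsub>R\<^esub> E m"
  using E_bimod by blast

lemma E_right: "a \<in> S \<Longrightarrow> m \<in> carrier R \<Longrightarrow> E (m \<otimes>\<^bsub>R\<^esub> a) = E m \<otimes>\<^bsub>R\<^esub> a"
  using E_bimod by blast

lemma E_smult: "m \<in> carrier R \<Longrightarrow> E (c \<odot>\<^bsub>R\<^esub> m) = c \<odot>\<^bsub>R\<^esub> E m"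
proof -
  assume m: "m \<in> carrier R"
  have c1: "c \<odot>\<^bsub>R\<^esub> \<one>\<^bsub>R\<^esub> \<in> S"
    using sub by (simp add: subalg_def)
  have "E (c \<odot>\<^bsub>R\<^esub> m) = E ((c \<odot>\<^bsub>R\<^esub> \<one>\<^bsub>R\<^esub>) \<otimes>\<^bsub>R\<^esub> m)"
    using m by (simp add: sm_mult_left)
  also have "\<dots> = (c \<odot>\<^bsub>R\<^esub> \<one>\<^bsub>R\<^esub>) \<otimes>\<^bsub>R\<^esub> E m"
    using E_left[OF c1 m] .
  finally show ?thesis
    using m by (simp add: sm_mult_left)
qed

lemma r_closed [simp]: "i < n \<Longrightarrow> r i \<in> carrier R"
  using rs_in by blast

lemma s_closed [simp]: "i < n \<Longrightarrow> s i \<in> carrier R"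
  using rs_in by blast

section \<open>The tensor product \<open>R \<otimes>\<^sub>S R\<close>\<close>

abbreviation "Rel \<equiv> tens_rel R S"
abbreviation "FS \<equiv> fsums R"
abbreviation "cls \<equiv> tens_class R S"
abbreviation "R1 \<equiv> basic_constr R S E r s n"

definition eqv :: "('a \<times> 'a \<Rightarrow> 'k) \<Rightarrow> ('a \<times> 'a \<Rightarrow> 'k) \<Rightarrow> bool" where
  "eqv f g \<longleftrightarrow> (\<lambda>p. f p - g p) \<in> Rel"

lemma FS_iff: "f \<in> FS \<longleftrightarrow> finite (supp f) \<and> supp f \<subseteq> carrier R \<times> carrier R"
  by (simp add: fsums_def)

lemma FS_finite: "f \<in> FS \<Longrightarrow> finite (supp f)"
  by (simp add: FS_iff)

lemma FS_supp_closed: "f \<in> FS \<Longrightarrow> p \<in> supp f \<Longrightarrow> fst p \<in> carrier R \<and> snd p \<in> carrier R"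
  by (auto simp: FS_iff)

lemma FS_zero [simp, intro]: "(\<lambda>_. 0) \<in> FS"
  by (simp add: fsums_def supp_def)

lemma FS_add [intro]: "f \<in> FS \<Longrightarrow> g \<in> FS \<Longrightarrow> (\<lambda>p. f p + g p) \<in> FS"
  unfolding FS_iff using supp_add[of f g] by (meson finite_Un finite_subset le_sup_iff order_trans)

lemma FS_diff [intro]: "f \<in> FS \<Longrightarrow> g \<in> FS \<Longrightarrow> (\<lambda>p. f p - g p) \<in> FS"
  unfolding FS_iff using supp_diff[of f g] by (meson finite_Un finite_subset le_sup_iff order_trans)

lemma FS_smult [intro]: "f \<in> FS \<Longrightarrow> (\<lambda>p. c * f p) \<in> FS"
  unfolding FS_iff using supp_smult[of c f] by (meson finite_subset order_trans)

lemma FS_dlt [intro]: "a \<in> carrier R \<Longrightarrow> b \<in> carrier R \<Longrightarrow> dlt a b \<in> FS"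
  by (simp add: FS_iff)

lemma FS_sum [intro]:
  "finite I \<Longrightarrow> (\<And>i. i \<in> I \<Longrightarrow> F i \<in> FS) \<Longrightarrow> (\<lambda>p. \<Sum>i\<in>I. F i p) \<in> FS"
proof (induction I rule: finite_induct)
  case (insert x I)
  then show ?case
    using FS_add[of "F x" "\<lambda>p. \<Sum>i\<in>I. F i p"] by simp
qed simp

lemma FS_pair_sum [intro]:
  "finite I \<Longrightarrow> (\<And>i. i \<in> I \<Longrightarrow> a i \<in> carrier R \<and> b i \<in> carrier R) \<Longrightarrow> pair_sum I c a b \<in> FS"
  unfolding pair_sum_def by (intro FS_sum FS_smult FS_dlt) auto

lemma Rel_FS: "h \<in> Rel \<Longrightarrow> h \<in> FS"
  by (induction rule: tens_rel.induct) (use S_subset in \<open>auto intro!: FS_diff FS_smult\<close>)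

lemma Rel_zero [intro]: "(\<lambda>_. 0) \<in> Rel"
  by (rule tens_rel.zero)

lemma Rel_add [intro]: "f \<in> Rel \<Longrightarrow> g \<in> Rel \<Longrightarrow> (\<lambda>p. f p + g p) \<in> Rel"
  by (rule tens_rel.add)

lemma Rel_smult [intro]: "f \<in> Rel \<Longrightarrow> (\<lambda>p. c * f p) \<in> Rel"
  by (rule tens_rel.smul)

lemma Rel_uminus [intro]: "f \<in> Rel \<Longrightarrow> (\<lambda>p. - f p) \<in> Rel"
  using Rel_smult[of f "-1"] by simp

lemma Rel_sum [intro]:
  "finite I \<Longrightarrow> (\<And>i. i \<in> I \<Longrightarrow> F i \<in> Rel) \<Longrightarrow> (\<lambda>p. \<Sum>i\<in>I. F i p) \<in> Rel"
proof (induction I rule: finite_induct)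
  case (insert x I)
  then show ?case
    using Rel_add[of "F x" "\<lambda>p. \<Sum>i\<in>I. F i p"] by simp
qed auto

lemma Rel_lincomb:
  "finite Q \<Longrightarrow> (\<And>q. q \<in> Q \<Longrightarrow> F q \<in> Rel) \<Longrightarrow> (\<lambda>t. \<Sum>q\<in>Q. c q * F q t) \<in> Rel"
  by (intro Rel_sum Rel_smult)

lemma eqv_refl [intro]: "eqv f f"
  by (simp add: eqv_def Rel_zero)

lemma eqv_sym: "eqv f g \<Longrightarrow> eqv g f"
  unfolding eqv_def using Rel_uminus by fastforce

lemma eqv_trans [trans]: "eqv f g \<Longrightarrow> eqv g h \<Longrightarrow> eqv f h"
  unfolding eqv_def using Rel_add[of "\<lambda>p. f p - g p" "\<lambda>p. g p - h p"] by simp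

lemma eq_eqv_trans [trans]: "f = g \<Longrightarrow> eqv g h \<Longrightarrow> eqv f h"
  by simp

lemma eqv_eq_trans [trans]: "eqv f g \<Longrightarrow> g = h \<Longrightarrow> eqv f h"
  by simp

lemma eqv_add: "eqv f g \<Longrightarrow> eqv f' g' \<Longrightarrow> eqv (\<lambda>p. f p + f' p) (\<lambda>p. g p + g' p)"
  unfolding eqv_def using Rel_add[of "\<lambda>p. f p - g p" "\<lambda>p. f' p - g' p"]
  by (simp add: algebra_simps)

lemma eqv_smult: "eqv f g \<Longrightarrow> eqv (\<lambda>p. c * f p) (\<lambda>p. c * g p)"
  unfolding eqv_def using Rel_smult[of "\<lambda>p. f p - g p" c] by (simp add: algebra_simps)

lemma eqv_sum:
  "finite I \<Longrightarrow> (\<And>i. i \<in> I \<Longrightarrow> eqv (F i) (G i)) \<Longrightarrow>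
    eqv (\<lambda>p. \<Sum>i\<in>I. F i p) (\<lambda>p. \<Sum>i\<in>I. G i p)"
  unfolding eqv_def using Rel_sum[of I "\<lambda>i p. F i p - G i p"] by (simp add: sum_subtractf)

lemma eqv_add_left:
  "a \<in> carrier R \<Longrightarrow> a' \<in> carrier R \<Longrightarrow> b \<in> carrier R \<Longrightarrow>
    eqv (\<lambda>p. dlt a b p + dlt a' b p) (dlt (a \<oplus>\<^bsub>R\<^esub> a') b)"
  unfolding eqv_def using Rel_uminus[OF tens_rel.addl[of a R a' b S]]
  by (simp add: algebra_simps)

lemma eqv_add_right:
  "a \<in> carrier R \<Longrightarrow> b \<in> carrier R \<Longrightarrow> b' \<in> carrier R \<Longrightarrow>
    eqv (\<lambda>p. dlt a b p + dlt a b' p) (dlt a (b \<oplus>\<^bsub>R\<^esub> b'))"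
  unfolding eqv_def using Rel_uminus[OF tens_rel.addr[of a R b b' S]]
  by (simp add: algebra_simps)

lemma eqv_smult_left:
  "a \<in> carrier R \<Longrightarrow> b \<in> carrier R \<Longrightarrow> eqv (dlt (c \<odot>\<^bsub>R\<^esub> a) b) (\<lambda>p. c * dlt a b p)"
  unfolding eqv_def by (rule tens_rel.scl)

lemma eqv_smult_right:
  "a \<in> carrier R \<Longrightarrow> b \<in> carrier R \<Longrightarrow> eqv (dlt a (c \<odot>\<^bsub>R\<^esub> b)) (\<lambda>p. c * dlt a b p)"
  unfolding eqv_def by (rule tens_rel.scr)

lemma eqv_balanced:
  "a \<in> carrier R \<Longrightarrow> b \<in> carrier R \<Longrightarrow> x \<in> S \<Longrightarrow> eqv (dlt (a \<otimes>\<^bsub>R\<^esub> x) b) (dlt a (x \<otimes>\<^bsub>R\<^esub> b))"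
  unfolding eqv_def by (rule tens_rel.bal)

lemma cls_self: "f \<in> FS \<Longrightarrow> f \<in> cls f"
  by (simp add: tens_class_def Rel_zero)

lemma cls_eq_iff: "f \<in> FS \<Longrightarrow> g \<in> FS \<Longrightarrow> cls f = cls g \<longleftrightarrow> eqv f g"
proof
  assume "g \<in> FS" "cls f = cls g"
  then show "eqv f g"
    using cls_self by (auto simp: tens_class_def eqv_def)
next
  assume "eqv f g"
  then show "cls f = cls g"
    unfolding tens_class_def using eqv_trans eqv_sym unfolding eqv_def[symmetric] by blast
qed

lemma cls_eqI: "f \<in> FS \<Longrightarrow> g \<in> FS \<Longrightarrow> eqv f g \<Longrightarrow> cls f = cls g"
  using cls_eq_iff by blast

lemma rep_cls: "f \<in> FS \<Longrightarrow> rep (cls f) \<in> FS \<and> eqv f (rep (cls f))"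
proof -
  assume "f \<in> FS"
  then have "rep (cls f) \<in> cls f"
    unfolding rep_def using cls_self by (metis someI_ex)
  then show ?thesis
    by (simp add: tens_class_def eqv_def)
qed

lemma carrier_R1: "carrier R1 = cls ` FS"
  by (simp add: basic_constr_def tens_carrier_def)

lemma carrier_R1E: "U \<in> carrier R1 \<Longrightarrow> (\<And>f. f \<in> FS \<Longrightarrow> U = cls f \<Longrightarrow> P) \<Longrightarrow> P"
  using carrier_R1 by blast

lemma cls_closed [intro, simp]: "f \<in> FS \<Longrightarrow> cls f \<in> carrier R1"
  using carrier_R1 by blast

lemma zero_R1: "\<zero>\<^bsub>R1\<^esub> = cls (\<lambda>_. 0)"
  by (simp add: basic_constr_def)

lemma add_R1:
  assumes "f \<in> FS" "g \<in> FS"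
  shows "cls f \<oplus>\<^bsub>R1\<^esub> cls g = cls (\<lambda>p. f p + g p)"
proof -
  have "cls (\<lambda>p. rep (cls f) p + rep (cls g) p) = cls (\<lambda>p. f p + g p)"
    using assms rep_cls[of f] rep_cls[of g] by (intro cls_eqI eqv_sym[OF eqv_add]) auto
  then show ?thesis
    by (simp add: basic_constr_def)
qed

lemma smult_R1:
  assumes "f \<in> FS"
  shows "c \<odot>\<^bsub>R1\<^esub> cls f = cls (\<lambda>p. c * f p)"
proof -
  have "cls (\<lambda>p. c * rep (cls f) p) = cls (\<lambda>p. c * f p)"
    using assms rep_cls[of f] by (intro cls_eqI eqv_sym[OF eqv_smult]) auto
  then show ?thesis
    by (simp add: basic_constr_def)
qed

lemma eqv_dlt_sum_left:
  "finite I \<Longrightarrow> (\<And>i. i \<in> I \<Longrightarrow> a i \<in> carrier R) \<Longrightarrow> b \<in> carrier R \<Longrightarrow>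
    eqv (\<lambda>p. \<Sum>i\<in>I. dlt (a i) b p) (dlt (finsum R a I) b)"
proof (induction I rule: finite_induct)
  case empty
  have "eqv (dlt (0 \<odot>\<^bsub>R\<^esub> \<zero>\<^bsub>R\<^esub>) b) (\<lambda>p. 0 * dlt \<zero>\<^bsub>R\<^esub> b p)"
    using empty by (intro eqv_smult_left) auto
  then show ?case
    by (simp add: eqv_sym)
next
  case (insert x I)
  have "(\<lambda>p. \<Sum>i\<in>insert x I. dlt (a i) b p) = (\<lambda>p. dlt (a x) b p + (\<Sum>i\<in>I. dlt (a i) b p))"
    using insert by simp
  also have "eqv \<dots> (\<lambda>p. dlt (a x) b p + dlt (finsum R a I) b p)"
    using insert by (intro eqv_add) auto
  also have "eqv \<dots> (dlt (a x \<oplus>\<^bsub>R\<^esub> finsum R a I) b)"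
    using insert by (intro eqv_add_left ringR.finsum_closed) auto
  finally show ?case
    using insert by (simp add: ringR.finsum_insert)
qed

lemma eqv_dlt_sum_right:
  "finite I \<Longrightarrow> (\<And>i. i \<in> I \<Longrightarrow> b i \<in> carrier R) \<Longrightarrow> a \<in> carrier R \<Longrightarrow>
    eqv (\<lambda>p. \<Sum>i\<in>I. dlt a (b i) p) (dlt a (finsum R b I))"
proof (induction I rule: finite_induct)
  case empty
  have "eqv (dlt a (0 \<odot>\<^bsub>R\<^esub> \<zero>\<^bsub>R\<^esub>)) (\<lambda>p. 0 * dlt a \<zero>\<^bsub>R\<^esub> p)"
    using empty by (intro eqv_smult_right) auto
  then show ?case
    by (simp add: eqv_sym)
next
  case (insert x I)
  have "(\<lambda>p. \<Sum>i\<in>insert x I. dlt a (b i) p) = (\<lambda>p. dlt a (b x) p + (\<Sum>i\<in>I. dlt a (b i) p))"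
    using insert by simp
  also have "eqv \<dots> (\<lambda>p. dlt a (b x) p + dlt a (finsum R b I) p)"
    using insert by (intro eqv_add) auto
  also have "eqv \<dots> (dlt a (b x \<oplus>\<^bsub>R\<^esub> finsum R b I))"
    using insert by (intro eqv_add_right ringR.finsum_closed) auto
  finally show ?case
    using insert by (simp add: ringR.finsum_insert)
qed

section \<open>Multiplication on \<open>R \<otimes>\<^sub>S R\<close>\<close>

abbreviation "fmult \<equiv> bc_mult R E"

definition pair_mult :: "'a \<times> 'a \<Rightarrow> 'a \<times> 'a \<Rightarrow> 'a \<times> 'a \<Rightarrow> 'k" where
  "pair_mult p q = dlt (fst p \<otimes>\<^bsub>R\<^esub> E (snd p \<otimes>\<^bsub>R\<^esub> fst q)) (snd q)"

lemma fmult_eq_sum_left: "fmult f g = (\<lambda>t. \<Sum>p\<in>supp f. f p * lin_ext (\<lambda>q. pair_mult p q t) g)"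
  unfolding bc_mult_def lin_ext_def pair_mult_def
  by (simp only: sum_distrib_left mult.assoc)

lemma fmult_eq_sum_right: "fmult f g = (\<lambda>t. \<Sum>q\<in>supp g. g q * lin_ext (\<lambda>p. pair_mult p q t) f)"
  unfolding bc_mult_def lin_ext_def pair_mult_def
  by (subst sum.swap) (simp only: sum_distrib_left mult.assoc mult.left_commute)

lemma fmult_lin_ext_left: "fmult f g t = lin_ext (\<lambda>p. lin_ext (\<lambda>q. pair_mult p q t) g) f"
  unfolding fmult_eq_sum_left lin_ext_def ..

lemma fmult_lin_ext_right: "fmult f g t = lin_ext (\<lambda>q. lin_ext (\<lambda>p. pair_mult p q t) f) g"
  unfolding fmult_eq_sum_right lin_ext_def ..

lemma fmult_pair_sum:
  assumes "finite I" "finite J"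
  shows "fmult (pair_sum I c a b) (pair_sum J d a' b') =
    pair_sum (I \<times> J) (\<lambda>(i, j). c i * d j) (\<lambda>(i, j). a i \<otimes>\<^bsub>R\<^esub> E (b i \<otimes>\<^bsub>R\<^esub> a' j)) (\<lambda>(i, j). b' j)"
proof (rule ext)
  fix t
  have "fmult (pair_sum I c a b) (pair_sum J d a' b') t =
      (\<Sum>i\<in>I. c i * (\<Sum>j\<in>J. d j * pair_mult (a i, b i) (a' j, b' j) t))"
    by (simp only: fmult_lin_ext_left lin_ext_pair_sum assms)
  also have "\<dots> = (\<Sum>i\<in>I. \<Sum>j\<in>J. c i * d j * dlt (a i \<otimes>\<^bsub>R\<^esub> E (b i \<otimes>\<^bsub>R\<^esub> a' j)) (b' j) t)"
    by (simp only: sum_distrib_left mult.assoc pair_mult_def fst_conv snd_conv)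
  finally show "fmult (pair_sum I c a b) (pair_sum J d a' b') t = pair_sum (I \<times> J)
      (\<lambda>(i, j). c i * d j) (\<lambda>(i, j). a i \<otimes>\<^bsub>R\<^esub> E (b i \<otimes>\<^bsub>R\<^esub> a' j)) (\<lambda>(i, j). b' j) t"
    by (simp only: pair_sum_cartesian split_conv)
qed

lemma fmult_eq_pair_sum:
  assumes "f \<in> FS" "g \<in> FS"
  shows "fmult f g = pair_sum (supp f \<times> supp g) (\<lambda>(i, j). f i * g j)
    (\<lambda>(i, j). fst i \<otimes>\<^bsub>R\<^esub> E (snd i \<otimes>\<^bsub>R\<^esub> fst j)) (\<lambda>(i, j). snd j)"
  using fmult_pair_sum[of "supp f" "supp g" f fst snd g fst snd] assms
  by (simp add: pair_sum_supp FS_finite)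

lemma fmult_FS:
  assumes "f \<in> FS" "g \<in> FS"
  shows "fmult f g \<in> FS"
  using assms FS_supp_closed[OF assms(1)] FS_supp_closed[OF assms(2)]
  by (auto simp: fmult_eq_pair_sum FS_finite intro!: FS_pair_sum)

lemma fmult_add_left:
  "finite (supp f) \<Longrightarrow> finite (supp f') \<Longrightarrow> fmult (\<lambda>p. f p + f' p) g = (\<lambda>t. fmult f g t + fmult f' g t)"
  by (rule ext) (simp only: fmult_lin_ext_left lin_ext_add)

lemma fmult_diff_left:
  "finite (supp f) \<Longrightarrow> finite (supp f') \<Longrightarrow> fmult (\<lambda>p. f p - f' p) g = (\<lambda>t. fmult f g t - fmult f' g t)"
  by (rule ext) (simp only: fmult_lin_ext_left lin_ext_diff)

lemma fmult_smult_left: "finite (supp f) \<Longrightarrow> fmult (\<lambda>p. c * f p) g = (\<lambda>t. c * fmult f g t)"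
  by (rule ext) (simp only: fmult_lin_ext_left lin_ext_smult)

lemma fmult_add_right:
  "finite (supp g) \<Longrightarrow> finite (supp g') \<Longrightarrow> fmult f (\<lambda>p. g p + g' p) = (\<lambda>t. fmult f g t + fmult f g' t)"
  by (rule ext) (simp only: fmult_lin_ext_right lin_ext_add)

lemma fmult_diff_right:
  "finite (supp g) \<Longrightarrow> finite (supp g') \<Longrightarrow> fmult f (\<lambda>p. g p - g' p) = (\<lambda>t. fmult f g t - fmult f g' t)"
  by (rule ext) (simp only: fmult_lin_ext_right lin_ext_diff)

lemma fmult_smult_right: "finite (supp g) \<Longrightarrow> fmult f (\<lambda>p. c * g p) = (\<lambda>t. c * fmult f g t)"
  by (rule ext) (simp only: fmult_lin_ext_right lin_ext_smult)

lemma fmult_dlt_left: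
  "fmult (dlt x y) f = (\<lambda>t. \<Sum>q\<in>supp f. f q * dlt (x \<otimes>\<^bsub>R\<^esub> E (y \<otimes>\<^bsub>R\<^esub> fst q)) (snd q) t)"
  unfolding fmult_eq_sum_right by (simp add: pair_mult_def)

lemma fmult_dlt_right:
  "fmult f (dlt x y) = (\<lambda>t. \<Sum>p\<in>supp f. f p * dlt (fst p \<otimes>\<^bsub>R\<^esub> E (snd p \<otimes>\<^bsub>R\<^esub> x)) y t)"
  unfolding fmult_eq_sum_left by (simp add: pair_mult_def)

lemma fmult_dlt_dlt: "fmult (dlt a b) (dlt c d) = dlt (a \<otimes>\<^bsub>R\<^esub> E (b \<otimes>\<^bsub>R\<^esub> c)) d"
  by (simp add: fmult_dlt_left) (simp add: dlt_def)

text \<open>\<open>\<lambda>t. lin_ext (\<lambda>p. pair_mult p q t) h\<close> is the product of \<open>h\<close> with the single pair \<open>q\<close>.\<close>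

lemma pair_mult_right_Rel:
  assumes "h \<in> Rel" "fst q \<in> carrier R" "snd q \<in> carrier R"
  shows "(\<lambda>t. lin_ext (\<lambda>p. pair_mult p q t) h) \<in> Rel"
  using assms(1)
proof (induction rule: tens_rel.induct)
  case (add f g)
  then show ?case
    by (simp add: lin_ext_add Rel_FS FS_finite Rel_add)
next
  case (smul f c)
  then show ?case
    by (simp add: lin_ext_smult Rel_FS FS_finite Rel_smult)
next
  case (addl a a' b)
  then show ?case
    using assms by (simp add: lin_ext_dlt_diff3 pair_mult_def ringR.l_distr tens_rel.addl)
next
  case (addr a b b')
  then show ?case
    using assms
    by (simp add: lin_ext_dlt_diff3 pair_mult_def ringR.l_distr ringR.r_distr E_plus tens_rel.addl)
next
  case (scl a b c)
  then show ?case
    using assms by (simp add: lin_ext_dlt_diff2 pair_mult_def sm_mult_left tens_rel.scl)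
next
  case (scr a b c)
  then show ?case
    using assms
    by (simp add: lin_ext_dlt_diff2 pair_mult_def sm_mult_left sm_mult_right E_smult tens_rel.scl)
next
  case (bal a b x)
  then have "x \<in> carrier R"
    using S_subset by auto
  then show ?case
    using assms bal by (simp add: lin_ext_dlt_diff2 pair_mult_def ringR.m_assoc E_left Rel_zero)
qed (simp add: Rel_zero)

lemma pair_mult_left_Rel:
  assumes "h \<in> Rel" "fst p \<in> carrier R" "snd p \<in> carrier R"
  shows "(\<lambda>t. lin_ext (\<lambda>q. pair_mult p q t) h) \<in> Rel"
  using assms(1)
proof (induction rule: tens_rel.induct)
  case (add f g)
  then show ?case
    by (simp add: lin_ext_add Rel_FS FS_finite Rel_add)
next
  case (smul f c)
  then show ?case
    by (simp add: lin_ext_smult Rel_FS FS_finite Rel_smult)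
next
  case (addl a a' b)
  then show ?case
    using assms
    by (simp add: lin_ext_dlt_diff3 pair_mult_def ringR.l_distr ringR.r_distr E_plus tens_rel.addl)
next
  case (addr a b b')
  then show ?case
    using assms by (simp add: lin_ext_dlt_diff3 pair_mult_def tens_rel.addr)
next
  case (scl a b c)
  then show ?case
    using assms by (simp add: lin_ext_dlt_diff2 pair_mult_def sm_mult_right E_smult tens_rel.scl)
next
  case (scr a b c)
  then show ?case
    using assms by (simp add: lin_ext_dlt_diff2 pair_mult_def tens_rel.scr)
next
  case (bal a b x)
  have "fst p \<otimes>\<^bsub>R\<^esub> E (snd p \<otimes>\<^bsub>R\<^esub> (a \<otimes>\<^bsub>R\<^esub> x)) = fst p \<otimes>\<^bsub>R\<^esub> E (snd p \<otimes>\<^bsub>R\<^esub> a) \<otimes>\<^bsub>R\<^esub> x"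
    using assms bal S_subset by (auto simp: ringR.m_assoc[symmetric] E_right)
  then show ?case
    using assms bal by (auto simp: lin_ext_dlt_diff2 pair_mult_def intro: tens_rel.bal)
qed (simp add: Rel_zero)

lemma fmult_Rel_left: "h \<in> Rel \<Longrightarrow> g \<in> FS \<Longrightarrow> fmult h g \<in> Rel"
  unfolding fmult_eq_sum_right
  by (intro Rel_lincomb FS_finite pair_mult_right_Rel) (auto dest: FS_supp_closed)

lemma fmult_Rel_right: "h \<in> Rel \<Longrightarrow> f \<in> FS \<Longrightarrow> fmult f h \<in> Rel"
  unfolding fmult_eq_sum_left
  by (intro Rel_lincomb FS_finite pair_mult_left_Rel) (auto dest: FS_supp_closed)

lemma fmult_eqv:
  assumes "f \<in> FS" "f' \<in> FS" "g \<in> FS" "g' \<in> FS" "eqv f f'" "eqv g g'"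
  shows "eqv (fmult f g) (fmult f' g')"
proof -
  have "(\<lambda>t. fmult f g t - fmult f' g' t) =
      (\<lambda>t. fmult (\<lambda>p. f p - f' p) g t + fmult f' (\<lambda>p. g p - g' p) t)"
    using assms by (simp add: fmult_diff_left fmult_diff_right FS_finite)
  also have "\<dots> \<in> Rel"
    using assms by (intro Rel_add fmult_Rel_left fmult_Rel_right) (auto simp: eqv_def)
  finally show ?thesis
    unfolding eqv_def .
qed

lemma mult_R1: "f \<in> FS \<Longrightarrow> g \<in> FS \<Longrightarrow> cls f \<otimes>\<^bsub>R1\<^esub> cls g = cls (fmult f g)"
proof -
  assume fg: "f \<in> FS" "g \<in> FS"
  have "cls (fmult (rep (cls f)) (rep (cls g))) = cls (fmult f g)"
    using fg rep_cls[of f] rep_cls[of g]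
    by (intro cls_eqI fmult_FS eqv_sym[OF fmult_eqv]) auto
  then show ?thesis
    by (simp add: basic_constr_def)
qed

lemma fmult_fmult_left_eq_triple_sum:
  assumes f: "f \<in> FS" and g: "g \<in> FS" and h: "h \<in> FS"
  shows "fmult (fmult f g) h t = (\<Sum>i\<in>supp f. \<Sum>j\<in>supp g. \<Sum>k\<in>supp h. f i * g j * h k *
    dlt ((fst i \<otimes>\<^bsub>R\<^esub> E (snd i \<otimes>\<^bsub>R\<^esub> fst j)) \<otimes>\<^bsub>R\<^esub> E (snd j \<otimes>\<^bsub>R\<^esub> fst k)) (snd k) t)"
proof -
  have "fmult (fmult f g) h t = (\<Sum>x\<in>supp f \<times> supp g. (case x of (i, j) \<Rightarrow> f i * g j) *
      lin_ext (\<lambda>q. pair_mult (case x of (i, j) \<Rightarrow> fst i \<otimes>\<^bsub>R\<^esub> E (snd i \<otimes>\<^bsub>R\<^esub> fst j),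
        case x of (i, j) \<Rightarrow> snd j) q t) h)"
    unfolding fmult_eq_pair_sum[OF f g] fmult_lin_ext_left using f g
    by (subst lin_ext_pair_sum) (auto simp: FS_finite)
  also have "\<dots> = (\<Sum>i\<in>supp f. \<Sum>j\<in>supp g. f i * g j * (\<Sum>k\<in>supp h. h k *
      dlt ((fst i \<otimes>\<^bsub>R\<^esub> E (snd i \<otimes>\<^bsub>R\<^esub> fst j)) \<otimes>\<^bsub>R\<^esub> E (snd j \<otimes>\<^bsub>R\<^esub> fst k)) (snd k) t))"
    by (simp add: sum.cartesian_product lin_ext_def pair_mult_def split_def)
  finally show ?thesis
    by (simp add: sum_distrib_left mult.assoc)
qed

lemma fmult_fmult_right_eq_triple_sum:
  assumes f: "f \<in> FS" and g: "g \<in> FS" and h: "h \<in> FS"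
  shows "fmult f (fmult g h) t = (\<Sum>j\<in>supp g. \<Sum>k\<in>supp h. \<Sum>i\<in>supp f. g j * h k * (f i *
    dlt (fst i \<otimes>\<^bsub>R\<^esub> E (snd i \<otimes>\<^bsub>R\<^esub> (fst j \<otimes>\<^bsub>R\<^esub> E (snd j \<otimes>\<^bsub>R\<^esub> fst k)))) (snd k) t))"
proof -
  have "fmult f (fmult g h) t = (\<Sum>y\<in>supp g \<times> supp h. (case y of (j, k) \<Rightarrow> g j * h k) *
      lin_ext (\<lambda>p. pair_mult p (case y of (j, k) \<Rightarrow> fst j \<otimes>\<^bsub>R\<^esub> E (snd j \<otimes>\<^bsub>R\<^esub> fst k),
        case y of (j, k) \<Rightarrow> snd k) t) f)"
    unfolding fmult_eq_pair_sum[OF g h] fmult_lin_ext_right using g h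
    by (subst lin_ext_pair_sum) (auto simp: FS_finite)
  also have "\<dots> = (\<Sum>j\<in>supp g. \<Sum>k\<in>supp h. g j * h k * (\<Sum>i\<in>supp f. f i *
      dlt (fst i \<otimes>\<^bsub>R\<^esub> E (snd i \<otimes>\<^bsub>R\<^esub> (fst j \<otimes>\<^bsub>R\<^esub> E (snd j \<otimes>\<^bsub>R\<^esub> fst k)))) (snd k) t))"
    by (simp add: sum.cartesian_product lin_ext_def pair_mult_def split_def)
  finally show ?thesis
    by (simp only: sum_distrib_left)
qed

text \<open>Associativity comes down to \<open>E (b a E(c)) = E(b a) E(c)\<close>, which holds as \<open>E\<close> takes
  values in \<open>S\<close>.\<close>

lemma fmult_assoc:
  assumes f: "f \<in> FS" and g: "g \<in> FS" and h: "h \<in> FS"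
  shows "fmult (fmult f g) h = fmult f (fmult g h)"
proof (rule ext)
  fix t
  let ?X = "\<lambda>i j k. dlt ((fst i \<otimes>\<^bsub>R\<^esub> E (snd i \<otimes>\<^bsub>R\<^esub> fst j)) \<otimes>\<^bsub>R\<^esub> E (snd j \<otimes>\<^bsub>R\<^esub> fst k)) (snd k) t"
  have "fmult f (fmult g h) t = (\<Sum>j\<in>supp g. \<Sum>k\<in>supp h. \<Sum>i\<in>supp f. f i * g j * h k * ?X i j k)"
    unfolding fmult_fmult_right_eq_triple_sum[OF f g h]
  proof (intro sum.cong refl)
    fix i j k assume "j \<in> supp g" "k \<in> supp h" "i \<in> supp f"
    then have "fst i \<otimes>\<^bsub>R\<^esub> E (snd i \<otimes>\<^bsub>R\<^esub> (fst j \<otimes>\<^bsub>R\<^esub> E (snd j \<otimes>\<^bsub>R\<^esub> fst k))) =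
        (fst i \<otimes>\<^bsub>R\<^esub> E (snd i \<otimes>\<^bsub>R\<^esub> fst j)) \<otimes>\<^bsub>R\<^esub> E (snd j \<otimes>\<^bsub>R\<^esub> fst k)"
      using FS_supp_closed[OF f] FS_supp_closed[OF g] FS_supp_closed[OF h] E_in_S
      by (simp add: ringR.m_assoc[symmetric] E_right)
    then show "g j * h k * (f i * dlt (fst i \<otimes>\<^bsub>R\<^esub> E (snd i \<otimes>\<^bsub>R\<^esub>
        (fst j \<otimes>\<^bsub>R\<^esub> E (snd j \<otimes>\<^bsub>R\<^esub> fst k)))) (snd k) t) = f i * g j * h k * ?X i j k"
      by (simp add: mult_ac)
  qed
  also have "\<dots> = fmult (fmult f g) h t"
    unfolding fmult_fmult_left_eq_triple_sum[OF f g h]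
    by (subst sum.swap) (simp add: sum.swap[of _ "supp h"])
  finally show "fmult (fmult f g) h t = fmult f (fmult g h) t"
    by simp
qed

definition unit_f :: "'a \<times> 'a \<Rightarrow> 'k" where
  "unit_f = (\<lambda>p. \<Sum>i<n. dlt (r i) (s i) p)"

lemma unit_f_pair_sum: "unit_f = pair_sum {..<n} (\<lambda>_. 1) r s"
  by (simp add: unit_f_def pair_sum_def)

lemma unit_f_FS: "unit_f \<in> FS"
  unfolding unit_f_pair_sum by (intro FS_pair_sum) auto

lemma one_R1: "\<one>\<^bsub>R1\<^esub> = cls unit_f"
  by (simp add: basic_constr_def unit_f_def)

lemma fmult_unit_left:
  assumes f: "f \<in> FS"
  shows "eqv (fmult unit_f f) f"
proof -
  have "fmult unit_f f = (\<lambda>t. \<Sum>q\<in>supp f. f q * (\<Sum>i<n. dlt (r i \<otimes>\<^bsub>R\<^esub> E (s i \<otimes>\<^bsub>R\<^esub> fst q)) (snd q) t))"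
    unfolding fmult_eq_sum_right unit_f_pair_sum by (simp add: lin_ext_pair_sum pair_mult_def)
  also have "eqv \<dots> (\<lambda>t. \<Sum>q\<in>supp f. f q * dlt (fst q) (snd q) t)"
  proof (intro eqv_sum eqv_smult FS_finite[OF f])
    fix q assume "q \<in> supp f"
    then have q: "fst q \<in> carrier R" "snd q \<in> carrier R"
      using FS_supp_closed[OF f] by auto
    have "eqv (\<lambda>t. \<Sum>i<n. dlt (r i \<otimes>\<^bsub>R\<^esub> E (s i \<otimes>\<^bsub>R\<^esub> fst q)) (snd q) t)
        (dlt (finsum R (\<lambda>i. r i \<otimes>\<^bsub>R\<^esub> E (s i \<otimes>\<^bsub>R\<^esub> fst q)) {..<n}) (snd q))"
      using q by (intro eqv_dlt_sum_left) auto
    then show "eqv (\<lambda>t. \<Sum>i<n. dlt (r i \<otimes>\<^bsub>R\<^esub> E (s i \<otimes>\<^bsub>R\<^esub> fst q)) (snd q) t) (dlt (fst q) (snd q))"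
      using dual2 q by simp
  qed
  also have "\<dots> = f"
    using f by (simp add: pair_sum_supp_expanded FS_finite)
  finally show ?thesis .
qed

lemma fmult_unit_right:
  assumes f: "f \<in> FS"
  shows "eqv (fmult f unit_f) f"
proof -
  have "fmult f unit_f = (\<lambda>t. \<Sum>p\<in>supp f. f p * (\<Sum>i<n. dlt (fst p \<otimes>\<^bsub>R\<^esub> E (snd p \<otimes>\<^bsub>R\<^esub> r i)) (s i) t))"
    unfolding fmult_eq_sum_left unit_f_pair_sum by (simp add: lin_ext_pair_sum pair_mult_def)
  also have "eqv \<dots> (\<lambda>t. \<Sum>p\<in>supp f. f p * dlt (fst p) (snd p) t)"
  proof (intro eqv_sum eqv_smult FS_finite[OF f])
    fix p assume "p \<in> supp f"
    then have p: "fst p \<in> carrier R" "snd p \<in> carrier R"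
      using FS_supp_closed[OF f] by auto
    have "eqv (\<lambda>t. \<Sum>i<n. dlt (fst p \<otimes>\<^bsub>R\<^esub> E (snd p \<otimes>\<^bsub>R\<^esub> r i)) (s i) t)
        (\<lambda>t. \<Sum>i<n. dlt (fst p) (E (snd p \<otimes>\<^bsub>R\<^esub> r i) \<otimes>\<^bsub>R\<^esub> s i) t)"
      using p E_in_S by (intro eqv_sum eqv_balanced) auto
    also have "eqv \<dots> (dlt (fst p) (finsum R (\<lambda>i. E (snd p \<otimes>\<^bsub>R\<^esub> r i) \<otimes>\<^bsub>R\<^esub> s i) {..<n}))"
      using p by (intro eqv_dlt_sum_right) auto
    finally show "eqv (\<lambda>t. \<Sum>i<n. dlt (fst p \<otimes>\<^bsub>R\<^esub> E (snd p \<otimes>\<^bsub>R\<^esub> r i)) (s i) t) (dlt (fst p) (snd p))"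
      using dual1 p by simp
  qed
  also have "\<dots> = f"
    using f by (simp add: pair_sum_supp_expanded FS_finite)
  finally show ?thesis .
qed

lemma abelian_group_R1: "abelian_group R1"
proof (rule abelian_groupI)
  fix x y assume "x \<in> carrier R1" "y \<in> carrier R1"
  then show "x \<oplus>\<^bsub>R1\<^esub> y \<in> carrier R1"
    by (elim carrier_R1E) (simp add: add_R1 FS_add)
next
  show "\<zero>\<^bsub>R1\<^esub> \<in> carrier R1"
    by (simp add: zero_R1)
next
  fix x y z assume "x \<in> carrier R1" "y \<in> carrier R1" "z \<in> carrier R1"
  then show "x \<oplus>\<^bsub>R1\<^esub> y \<oplus>\<^bsub>R1\<^esub> z = x \<oplus>\<^bsub>R1\<^esub> (y \<oplus>\<^bsub>R1\<^esub> z)"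
    by (elim carrier_R1E) (simp add: add_R1 FS_add add.assoc)
next
  fix x y assume "x \<in> carrier R1" "y \<in> carrier R1"
  then show "x \<oplus>\<^bsub>R1\<^esub> y = y \<oplus>\<^bsub>R1\<^esub> x"
    by (elim carrier_R1E) (simp add: add_R1 add.commute)
next
  fix x assume "x \<in> carrier R1"
  then show "\<zero>\<^bsub>R1\<^esub> \<oplus>\<^bsub>R1\<^esub> x = x"
    by (elim carrier_R1E) (simp add: add_R1 zero_R1)
next
  fix x assume "x \<in> carrier R1"
  then show "\<exists>y\<in>carrier R1. y \<oplus>\<^bsub>R1\<^esub> x = \<zero>\<^bsub>R1\<^esub>"
  proof (elim carrier_R1E)
    fix f assume f: "f \<in> FS" "x = cls f"
    have "(\<lambda>p. - f p) \<in> FS"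
      using FS_smult[OF f(1), of "-1"] by simp
    then show ?thesis
      using f by (intro bexI[of _ "cls (\<lambda>p. - f p)"]) (simp_all add: add_R1 zero_R1)
  qed
qed

lemma monoid_R1: "monoid R1"
proof (rule monoidI)
  fix x y assume "x \<in> carrier R1" "y \<in> carrier R1"
  then show "x \<otimes>\<^bsub>R1\<^esub> y \<in> carrier R1"
    by (elim carrier_R1E) (simp add: mult_R1 fmult_FS)
next
  show "\<one>\<^bsub>R1\<^esub> \<in> carrier R1"
    by (simp add: one_R1 unit_f_FS)
next
  fix x y z assume "x \<in> carrier R1" "y \<in> carrier R1" "z \<in> carrier R1"
  then show "x \<otimes>\<^bsub>R1\<^esub> y \<otimes>\<^bsub>R1\<^esub> z = x \<otimes>\<^bsub>R1\<^esub> (y \<otimes>\<^bsub>R1\<^esub> z)"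
    by (elim carrier_R1E) (simp add: mult_R1 fmult_FS fmult_assoc)
next
  fix x assume "x \<in> carrier R1"
  then show "\<one>\<^bsub>R1\<^esub> \<otimes>\<^bsub>R1\<^esub> x = x"
    by (elim carrier_R1E) (simp add: one_R1 mult_R1 unit_f_FS cls_eqI fmult_FS fmult_unit_left)
next
  fix x assume "x \<in> carrier R1"
  then show "x \<otimes>\<^bsub>R1\<^esub> \<one>\<^bsub>R1\<^esub> = x"
    by (elim carrier_R1E) (simp add: one_R1 mult_R1 unit_f_FS cls_eqI fmult_FS fmult_unit_right)
qed

lemma ring_R1: "ring R1"
proof (rule ringI[OF abelian_group_R1 monoid_R1])
  fix x y z assume "x \<in> carrier R1" "y \<in> carrier R1" "z \<in> carrier R1"
  then show "(x \<oplus>\<^bsub>R1\<^esub> y) \<otimes>\<^bsub>R1\<^esub> z = x \<otimes>\<^bsub>R1\<^esub> z \<oplus>\<^bsub>R1\<^esub> y \<otimes>\<^bsub>R1\<^esub> z"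
    by (elim carrier_R1E) (simp add: add_R1 mult_R1 FS_add fmult_FS fmult_add_left FS_finite)
next
  fix x y z assume "x \<in> carrier R1" "y \<in> carrier R1" "z \<in> carrier R1"
  then show "z \<otimes>\<^bsub>R1\<^esub> (x \<oplus>\<^bsub>R1\<^esub> y) = z \<otimes>\<^bsub>R1\<^esub> x \<oplus>\<^bsub>R1\<^esub> z \<otimes>\<^bsub>R1\<^esub> y"
    by (elim carrier_R1E) (simp add: add_R1 mult_R1 FS_add fmult_FS fmult_add_right FS_finite)
qed

lemma module_R1: "module kring R1"
proof (rule moduleI[OF modR.is_cring abelian_group_R1])
  fix a x assume "x \<in> carrier R1"
  then show "a \<odot>\<^bsub>R1\<^esub> x \<in> carrier R1"
    by (elim carrier_R1E) (simp add: smult_R1 FS_smult)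
next
  fix a b x assume "x \<in> carrier R1"
  then show "(a \<oplus>\<^bsub>kring\<^esub> b) \<odot>\<^bsub>R1\<^esub> x = a \<odot>\<^bsub>R1\<^esub> x \<oplus>\<^bsub>R1\<^esub> b \<odot>\<^bsub>R1\<^esub> x"
    by (elim carrier_R1E) (simp add: smult_R1 add_R1 FS_smult distrib_right)
next
  fix a x y assume "x \<in> carrier R1" "y \<in> carrier R1"
  then show "a \<odot>\<^bsub>R1\<^esub> (x \<oplus>\<^bsub>R1\<^esub> y) = a \<odot>\<^bsub>R1\<^esub> x \<oplus>\<^bsub>R1\<^esub> a \<odot>\<^bsub>R1\<^esub> y"
    by (elim carrier_R1E) (simp add: smult_R1 add_R1 FS_smult FS_add distrib_left)
next
  fix a b x assume "x \<in> carrier R1"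
  then show "(a \<otimes>\<^bsub>kring\<^esub> b) \<odot>\<^bsub>R1\<^esub> x = a \<odot>\<^bsub>R1\<^esub> (b \<odot>\<^bsub>R1\<^esub> x)"
    by (elim carrier_R1E) (simp add: smult_R1 FS_smult mult.assoc)
next
  fix x assume "x \<in> carrier R1"
  then show "\<one>\<^bsub>kring\<^esub> \<odot>\<^bsub>R1\<^esub> x = x"
    by (elim carrier_R1E) (simp add: smult_R1)
qed

lemma kalg_R1: "kalg R1"
  unfolding kalg_def
proof (intro conjI allI impI ring_R1 module_R1)
  fix c a b assume "a \<in> carrier R1" "b \<in> carrier R1"
  then show "(c \<odot>\<^bsub>R1\<^esub> a) \<otimes>\<^bsub>R1\<^esub> b = c \<odot>\<^bsub>R1\<^esub> (a \<otimes>\<^bsub>R1\<^esub> b)"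
    by (elim carrier_R1E) (simp add: smult_R1 mult_R1 FS_smult fmult_FS fmult_smult_left FS_finite)
next
  fix c a b assume "a \<in> carrier R1" "b \<in> carrier R1"
  then show "a \<otimes>\<^bsub>R1\<^esub> (c \<odot>\<^bsub>R1\<^esub> b) = c \<odot>\<^bsub>R1\<^esub> (a \<otimes>\<^bsub>R1\<^esub> b)"
    by (elim carrier_R1E) (simp add: smult_R1 mult_R1 FS_smult fmult_FS fmult_smult_right FS_finite)
qed

sublocale ringR1: ring R1
  by (rule ring_R1)

sublocale modR1: module kring R1
  by (rule module_R1)

abbreviation "\<iota> \<equiv> bc_incl R S r s n"

definition incl_f :: "'a \<Rightarrow> 'a \<times> 'a \<Rightarrow> 'k" where
  "incl_f a = pair_sum {..<n} (\<lambda>_. 1) (\<lambda>i. a \<otimes>\<^bsub>R\<^esub> r i) s"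

lemma incl_cls: "\<iota> a = cls (incl_f a)"
  by (simp add: bc_incl_def incl_f_def pair_sum_def)

lemma incl_f_FS: "a \<in> carrier R \<Longrightarrow> incl_f a \<in> FS"
  unfolding incl_f_def by (intro FS_pair_sum) auto

lemma incl_closed: "a \<in> carrier R \<Longrightarrow> \<iota> a \<in> carrier R1"
  by (simp add: incl_cls incl_f_FS)

lemma eqv_sum_dual2:
  assumes "x \<in> carrier R" "y \<in> carrier R" "a \<in> carrier R"
  shows "eqv (\<lambda>t. \<Sum>i<n. dlt (a \<otimes>\<^bsub>R\<^esub> r i \<otimes>\<^bsub>R\<^esub> E (s i \<otimes>\<^bsub>R\<^esub> x)) y t) (dlt (a \<otimes>\<^bsub>R\<^esub> x) y)"
proof -
  have "eqv (\<lambda>t. \<Sum>i<n. dlt (a \<otimes>\<^bsub>R\<^esub> r i \<otimes>\<^bsub>R\<^esub> E (s i \<otimes>\<^bsub>R\<^esub> x)) y t)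
      (dlt (finsum R (\<lambda>i. a \<otimes>\<^bsub>R\<^esub> r i \<otimes>\<^bsub>R\<^esub> E (s i \<otimes>\<^bsub>R\<^esub> x)) {..<n}) y)"
    using assms by (intro eqv_dlt_sum_left) auto
  moreover have "finsum R (\<lambda>i. a \<otimes>\<^bsub>R\<^esub> r i \<otimes>\<^bsub>R\<^esub> E (s i \<otimes>\<^bsub>R\<^esub> x)) {..<n} =
      a \<otimes>\<^bsub>R\<^esub> finsum R (\<lambda>i. r i \<otimes>\<^bsub>R\<^esub> E (s i \<otimes>\<^bsub>R\<^esub> x)) {..<n}"
    using assms
    by (subst ringR.finsum_rdistr) (auto simp: ringR.m_assoc intro!: ringR.finsum_cong')
  ultimately show ?thesis
    using dual2 assms by simp
qed

lemma eqv_sum_dual1: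
  assumes "x \<in> carrier R" "y \<in> carrier R" "a \<in> carrier R"
  shows "eqv (\<lambda>t. \<Sum>i<n. dlt (x \<otimes>\<^bsub>R\<^esub> E (y \<otimes>\<^bsub>R\<^esub> a \<otimes>\<^bsub>R\<^esub> r i)) (s i) t) (dlt x (y \<otimes>\<^bsub>R\<^esub> a))"
proof -
  have "eqv (\<lambda>t. \<Sum>i<n. dlt (x \<otimes>\<^bsub>R\<^esub> E (y \<otimes>\<^bsub>R\<^esub> a \<otimes>\<^bsub>R\<^esub> r i)) (s i) t)
      (\<lambda>t. \<Sum>i<n. dlt x (E (y \<otimes>\<^bsub>R\<^esub> a \<otimes>\<^bsub>R\<^esub> r i) \<otimes>\<^bsub>R\<^esub> s i) t)"
    using assms E_in_S by (intro eqv_sum eqv_balanced) auto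
  also have "eqv \<dots> (dlt x (finsum R (\<lambda>i. E (y \<otimes>\<^bsub>R\<^esub> a \<otimes>\<^bsub>R\<^esub> r i) \<otimes>\<^bsub>R\<^esub> s i) {..<n}))"
    using assms by (intro eqv_dlt_sum_right) auto
  finally show ?thesis
    using dual1 assms by simp
qed

lemma fmult_incl_f_left:
  assumes a: "a \<in> carrier R" and J: "finite J"
    and xy: "\<And>j. j \<in> J \<Longrightarrow> x j \<in> carrier R \<and> y j \<in> carrier R"
  shows "eqv (fmult (incl_f a) (pair_sum J c x y)) (pair_sum J c (\<lambda>j. a \<otimes>\<^bsub>R\<^esub> x j) y)"
proof -
  have "fmult (incl_f a) (pair_sum J c x y) =
      (\<lambda>t. \<Sum>j\<in>J. c j * (\<Sum>i<n. dlt (a \<otimes>\<^bsub>R\<^esub> r i \<otimes>\<^bsub>R\<^esub> E (s i \<otimes>\<^bsub>R\<^esub> x j)) (y j) t))"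
    unfolding incl_f_def fmult_pair_sum[OF finite_lessThan J]
    by (rule ext) (simp add: pair_sum_cartesian sum_distrib_left sum.swap[of _ "{..<n}"])
  also have "eqv \<dots> (pair_sum J c (\<lambda>j. a \<otimes>\<^bsub>R\<^esub> x j) y)"
    unfolding pair_sum_def using J xy a by (intro eqv_sum eqv_smult eqv_sum_dual2) auto
  finally show ?thesis .
qed

lemma fmult_incl_f_right:
  assumes a: "a \<in> carrier R" and J: "finite J"
    and xy: "\<And>j. j \<in> J \<Longrightarrow> x j \<in> carrier R \<and> y j \<in> carrier R"
  shows "eqv (fmult (pair_sum J c x y) (incl_f a)) (pair_sum J c x (\<lambda>j. y j \<otimes>\<^bsub>R\<^esub> a))"
proof -
  have "fmult (pair_sum J c x y) (incl_f a) =
      (\<lambda>t. \<Sum>j\<in>J. c j * (\<Sum>i<n. dlt (x j \<otimes>\<^bsub>R\<^esub> E (y j \<otimes>\<^bsub>R\<^esub> (a \<otimes>\<^bsub>R\<^esub> r i))) (s i) t))"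
    unfolding incl_f_def fmult_pair_sum[OF J finite_lessThan]
    by (rule ext) (simp add: pair_sum_cartesian sum_distrib_left)
  also have "\<dots> = (\<lambda>t. \<Sum>j\<in>J. c j * (\<Sum>i<n. dlt (x j \<otimes>\<^bsub>R\<^esub> E (y j \<otimes>\<^bsub>R\<^esub> a \<otimes>\<^bsub>R\<^esub> r i)) (s i) t))"
    using xy a by (intro ext sum.cong refl) (simp add: ringR.m_assoc)
  also have "eqv \<dots> (pair_sum J c x (\<lambda>j. y j \<otimes>\<^bsub>R\<^esub> a))"
    unfolding pair_sum_def using J xy a by (intro eqv_sum eqv_smult eqv_sum_dual1) auto
  finally show ?thesis .
qed

lemma incl_mult_cls:
  assumes "a \<in> carrier R" "f \<in> FS"
  shows "\<iota> a \<otimes>\<^bsub>R1\<^esub> cls f = cls (pair_sum (supp f) f (\<lambda>q. a \<otimes>\<^bsub>R\<^esub> fst q) snd)"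
proof -
  have "eqv (fmult (incl_f a) (pair_sum (supp f) f fst snd)) (pair_sum (supp f) f (\<lambda>q. a \<otimes>\<^bsub>R\<^esub> fst q) snd)"
    using assms by (intro fmult_incl_f_left) (auto simp: FS_finite dest: FS_supp_closed)
  then have "cls (fmult (incl_f a) f) = cls (pair_sum (supp f) f (\<lambda>q. a \<otimes>\<^bsub>R\<^esub> fst q) snd)"
    using assms FS_supp_closed[OF assms(2)]
    by (intro cls_eqI fmult_FS incl_f_FS FS_pair_sum) (auto simp: pair_sum_supp FS_finite)
  then show ?thesis
    using assms by (simp add: incl_cls mult_R1 incl_f_FS)
qed

lemma cls_mult_incl:
  assumes "a \<in> carrier R" "f \<in> FS"
  shows "cls f \<otimes>\<^bsub>R1\<^esub> \<iota> a = cls (pair_sum (supp f) f fst (\<lambda>q. snd q \<otimes>\<^bsub>R\<^esub> a))"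
proof -
  have "eqv (fmult (pair_sum (supp f) f fst snd) (incl_f a)) (pair_sum (supp f) f fst (\<lambda>q. snd q \<otimes>\<^bsub>R\<^esub> a))"
    using assms by (intro fmult_incl_f_right) (auto simp: FS_finite dest: FS_supp_closed)
  then have "cls (fmult f (incl_f a)) = cls (pair_sum (supp f) f fst (\<lambda>q. snd q \<otimes>\<^bsub>R\<^esub> a))"
    using assms FS_supp_closed[OF assms(2)]
    by (intro cls_eqI fmult_FS incl_f_FS FS_pair_sum) (auto simp: pair_sum_supp FS_finite)
  then show ?thesis
    using assms by (simp add: incl_cls mult_R1 incl_f_FS)
qed

lemma incl_mult_dlt:
  "a \<in> carrier R \<Longrightarrow> x \<in> carrier R \<Longrightarrow> y \<in> carrier R \<Longrightarrow>
    \<iota> a \<otimes>\<^bsub>R1\<^esub> cls (dlt x y) = cls (dlt (a \<otimes>\<^bsub>R\<^esub> x) y)"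
  by (simp add: incl_mult_cls FS_dlt pair_sum_def) (simp add: dlt_def)

lemma dlt_mult_incl:
  "a \<in> carrier R \<Longrightarrow> x \<in> carrier R \<Longrightarrow> y \<in> carrier R \<Longrightarrow>
    cls (dlt x y) \<otimes>\<^bsub>R1\<^esub> \<iota> a = cls (dlt x (y \<otimes>\<^bsub>R\<^esub> a))"
  by (simp add: cls_mult_incl FS_dlt pair_sum_def) (simp add: dlt_def)

lemma incl_mult: "a \<in> carrier R \<Longrightarrow> b \<in> carrier R \<Longrightarrow> \<iota> a \<otimes>\<^bsub>R1\<^esub> \<iota> b = \<iota> (a \<otimes>\<^bsub>R\<^esub> b)"
proof -
  assume ab: "a \<in> carrier R" "b \<in> carrier R"
  have "eqv (fmult (incl_f a) (incl_f b)) (pair_sum {..<n} (\<lambda>_. 1) (\<lambda>i. a \<otimes>\<^bsub>R\<^esub> (b \<otimes>\<^bsub>R\<^esub> r i)) s)"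
    unfolding incl_f_def[of b] using ab by (intro fmult_incl_f_left) auto
  also have "pair_sum {..<n} (\<lambda>_. 1) (\<lambda>i. a \<otimes>\<^bsub>R\<^esub> (b \<otimes>\<^bsub>R\<^esub> r i)) s = incl_f (a \<otimes>\<^bsub>R\<^esub> b)"
    unfolding incl_f_def pair_sum_def using ab by (intro ext sum.cong refl) (simp add: ringR.m_assoc)
  finally show ?thesis
    using ab by (simp add: incl_cls mult_R1 incl_f_FS fmult_FS cls_eqI)
qed

lemma incl_one: "\<iota> \<one>\<^bsub>R\<^esub> = \<one>\<^bsub>R1\<^esub>"
proof -
  have "incl_f \<one>\<^bsub>R\<^esub> = unit_f"
    unfolding incl_f_def unit_f_pair_sum pair_sum_def by (intro ext sum.cong refl) simp
  then show ?thesis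
    by (simp add: incl_cls one_R1)
qed

lemma incl_add: "a \<in> carrier R \<Longrightarrow> b \<in> carrier R \<Longrightarrow> \<iota> a \<oplus>\<^bsub>R1\<^esub> \<iota> b = \<iota> (a \<oplus>\<^bsub>R\<^esub> b)"
proof -
  assume ab: "a \<in> carrier R" "b \<in> carrier R"
  have "(\<lambda>p. incl_f a p + incl_f b p) =
      (\<lambda>p. \<Sum>i<n. dlt (a \<otimes>\<^bsub>R\<^esub> r i) (s i) p + dlt (b \<otimes>\<^bsub>R\<^esub> r i) (s i) p)"
    by (simp add: incl_f_def pair_sum_def sum.distrib)
  also have "eqv \<dots> (\<lambda>p. \<Sum>i<n. dlt (a \<otimes>\<^bsub>R\<^esub> r i \<oplus>\<^bsub>R\<^esub> b \<otimes>\<^bsub>R\<^esub> r i) (s i) p)"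
    using ab by (intro eqv_sum eqv_add_left) auto
  also have "\<dots> = incl_f (a \<oplus>\<^bsub>R\<^esub> b)"
    unfolding incl_f_def pair_sum_def using ab by (intro ext sum.cong refl) (simp add: ringR.l_distr)
  finally show ?thesis
    using ab by (simp add: incl_cls add_R1 incl_f_FS FS_add cls_eqI)
qed

lemma incl_smult: "a \<in> carrier R \<Longrightarrow> c \<odot>\<^bsub>R1\<^esub> \<iota> a = \<iota> (c \<odot>\<^bsub>R\<^esub> a)"
proof -
  assume a: "a \<in> carrier R"
  have "(\<lambda>p. c * incl_f a p) = (\<lambda>p. \<Sum>i<n. c * dlt (a \<otimes>\<^bsub>R\<^esub> r i) (s i) p)"
    by (simp add: incl_f_def pair_sum_def sum_distrib_left)
  also have "eqv \<dots> (\<lambda>p. \<Sum>i<n. dlt (c \<odot>\<^bsub>R\<^esub> (a \<otimes>\<^bsub>R\<^esub> r i)) (s i) p)"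
    using a by (intro eqv_sum eqv_sym[OF eqv_smult_left]) auto
  also have "\<dots> = incl_f (c \<odot>\<^bsub>R\<^esub> a)"
    unfolding incl_f_def pair_sum_def using a by (intro ext sum.cong refl) (simp add: sm_mult_left)
  finally show ?thesis
    using a by (simp add: incl_cls smult_R1 incl_f_FS FS_smult cls_eqI)
qed

lemma incl_zero: "\<iota> \<zero>\<^bsub>R\<^esub> = \<zero>\<^bsub>R1\<^esub>"
  using incl_smult[of "\<zero>\<^bsub>R\<^esub>" 0] modR1.smult_l_null[OF incl_closed[of "\<zero>\<^bsub>R\<^esub>"]] by simp

section \<open>The conditional expectation \<open>E\<^sub>R : R\<^sub>1 \<rightarrow> R\<close>\<close>

text \<open>\<open>E\<^sub>R\<close> is \<open>\<lambda>\<close> times the multiplication map \<open>\<mu> : a \<otimes> b \<mapsto> a b\<close>, which is well defined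
  on \<open>R \<otimes>\<^sub>S R\<close> because it kills all relations.\<close>

definition mu :: "('a \<times> 'a \<Rightarrow> 'k) \<Rightarrow> 'a" where
  "mu f = finsum R (\<lambda>p. f p \<odot>\<^bsub>R\<^esub> (fst p \<otimes>\<^bsub>R\<^esub> snd p)) (supp f)"

abbreviation "ER \<equiv> bc_cond R lam"

lemma mu_superset:
  "finite P \<Longrightarrow> supp f \<subseteq> P \<Longrightarrow> P \<subseteq> carrier R \<times> carrier R \<Longrightarrow>
    mu f = finsum R (\<lambda>p. f p \<odot>\<^bsub>R\<^esub> (fst p \<otimes>\<^bsub>R\<^esub> snd p)) P"
  unfolding mu_def by (rule ringR.add.finprod_mono_neutral_cong_left) (auto simp: supp_def)

lemma mu_closed: "f \<in> FS \<Longrightarrow> mu f \<in> carrier R"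
  unfolding mu_def by (intro ringR.finsum_closed) (auto dest: FS_supp_closed)

lemma mu_add:
  assumes f: "f \<in> FS" and g: "g \<in> FS"
  shows "mu (\<lambda>p. f p + g p) = mu f \<oplus>\<^bsub>R\<^esub> mu g"
proof -
  let ?P = "supp f \<union> supp g"
  have P: "finite ?P" "?P \<subseteq> carrier R \<times> carrier R"
    using f g by (auto simp: FS_iff)
  have "mu (\<lambda>p. f p + g p) = finsum R (\<lambda>p. (f p + g p) \<odot>\<^bsub>R\<^esub> (fst p \<otimes>\<^bsub>R\<^esub> snd p)) ?P"
    using P supp_add[of f g] by (intro mu_superset) auto
  also have "\<dots> = finsum R (\<lambda>p. f p \<odot>\<^bsub>R\<^esub> (fst p \<otimes>\<^bsub>R\<^esub> snd p) \<oplus>\<^bsub>R\<^esub> g p \<odot>\<^bsub>R\<^esub> (fst p \<otimes>\<^bsub>R\<^esub> snd p)) ?P"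
    using P by (intro ringR.finsum_cong') (auto simp: sm_ldistr)
  also have "\<dots> = finsum R (\<lambda>p. f p \<odot>\<^bsub>R\<^esub> (fst p \<otimes>\<^bsub>R\<^esub> snd p)) ?P \<oplus>\<^bsub>R\<^esub>
      finsum R (\<lambda>p. g p \<odot>\<^bsub>R\<^esub> (fst p \<otimes>\<^bsub>R\<^esub> snd p)) ?P"
    using P by (intro ringR.finsum_addf) auto
  also have "\<dots> = mu f \<oplus>\<^bsub>R\<^esub> mu g"
    using P by (simp add: mu_superset[of ?P f] mu_superset[of ?P g])
  finally show ?thesis .
qed

lemma mu_smult:
  assumes f: "f \<in> FS"
  shows "mu (\<lambda>p. c * f p) = c \<odot>\<^bsub>R\<^esub> mu f"
proof -
  have P: "finite (supp f)" "supp f \<subseteq> carrier R \<times> carrier R"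
    using f by (auto simp: FS_iff)
  have "mu (\<lambda>p. c * f p) = finsum R (\<lambda>p. (c * f p) \<odot>\<^bsub>R\<^esub> (fst p \<otimes>\<^bsub>R\<^esub> snd p)) (supp f)"
    using P supp_smult[of c f] by (intro mu_superset) auto
  also have "\<dots> = finsum R (\<lambda>p. c \<odot>\<^bsub>R\<^esub> (f p \<odot>\<^bsub>R\<^esub> (fst p \<otimes>\<^bsub>R\<^esub> snd p))) (supp f)"
    using P by (intro ringR.finsum_cong') (auto simp: sm_assoc)
  also have "\<dots> = c \<odot>\<^bsub>R\<^esub> mu f"
    unfolding mu_def using P by (subst modR.finsum_smult_ldistr) auto
  finally show ?thesis .
qed

lemma mu_dlt: "a \<in> carrier R \<Longrightarrow> b \<in> carrier R \<Longrightarrow> mu (dlt a b) = a \<otimes>\<^bsub>R\<^esub> b"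
  unfolding mu_def supp_dlt by (simp add: dlt_def)

lemma mu_diff_eq_zero:
  assumes "f \<in> FS" "g \<in> FS" "mu f = mu g"
  shows "mu (\<lambda>p. f p - g p) = \<zero>\<^bsub>R\<^esub>"
proof -
  have "mu g = mu (\<lambda>p. (f p - g p) + g p)"
    using assms by simp
  also have "\<dots> = mu (\<lambda>p. f p - g p) \<oplus>\<^bsub>R\<^esub> mu g"
    using assms by (intro mu_add) auto
  finally show ?thesis
    using assms mu_closed[OF FS_diff[OF assms(1,2)]] mu_closed[OF assms(2)] by simp
qed

lemma mu_Rel: "h \<in> Rel \<Longrightarrow> mu h = \<zero>\<^bsub>R\<^esub>"
proof (induction rule: tens_rel.induct)
  case zero
  then show ?case
    by (simp add: mu_def supp_def)
next
  case (add f g)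
  then show ?case
    by (simp add: mu_add Rel_FS)
next
  case (smul f c)
  then show ?case
    by (simp add: mu_smult Rel_FS)
next
  case (addl a a' b)
  then show ?case
    using mu_diff_eq_zero[of "dlt (a \<oplus>\<^bsub>R\<^esub> a') b" "\<lambda>p. dlt a b p + dlt a' b p"]
    by (simp add: mu_add mu_dlt ringR.l_distr diff_diff_eq FS_add FS_dlt)
next
  case (addr a b b')
  then show ?case
    using mu_diff_eq_zero[of "dlt a (b \<oplus>\<^bsub>R\<^esub> b')" "\<lambda>p. dlt a b p + dlt a b' p"]
    by (simp add: mu_add mu_dlt ringR.r_distr diff_diff_eq FS_add FS_dlt)
next
  case (scl a b c)
  then show ?case
    by (intro mu_diff_eq_zero) (auto simp: mu_smult mu_dlt sm_mult_left FS_dlt)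
next
  case (scr a b c)
  then show ?case
    by (intro mu_diff_eq_zero) (auto simp: mu_smult mu_dlt sm_mult_right FS_dlt)
next
  case (bal a b x)
  then show ?case
    using S_subset by (intro mu_diff_eq_zero) (auto simp: mu_dlt ringR.m_assoc)
qed

lemma mu_eqv:
  assumes "f \<in> FS" "g \<in> FS" "eqv f g"
  shows "mu f = mu g"
proof -
  have h: "(\<lambda>p. f p - g p) \<in> Rel"
    using assms(3) by (simp add: eqv_def)
  have "mu (\<lambda>p. g p + (f p - g p)) = mu g \<oplus>\<^bsub>R\<^esub> mu (\<lambda>p. f p - g p)"
    using assms(2) Rel_FS[OF h] by (rule mu_add)
  then show ?thesis
    using mu_Rel[OF h] mu_closed[OF assms(2)] by simp
qed

lemma mu_pair_sum:
  "finite I \<Longrightarrow> (\<And>i. i \<in> I \<Longrightarrow> x i \<in> carrier R \<and> y i \<in> carrier R) \<Longrightarrow>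
    mu (pair_sum I c x y) = finsum R (\<lambda>i. c i \<odot>\<^bsub>R\<^esub> (x i \<otimes>\<^bsub>R\<^esub> y i)) I"
proof (induction I rule: finite_induct)
  case empty
  then show ?case
    by (simp add: pair_sum_def mu_def supp_def)
next
  case (insert j I)
  have "pair_sum (insert j I) c x y = (\<lambda>p. c j * dlt (x j) (y j) p + pair_sum I c x y p)"
    using insert by (simp add: pair_sum_def)
  then have "mu (pair_sum (insert j I) c x y) = c j \<odot>\<^bsub>R\<^esub> (x j \<otimes>\<^bsub>R\<^esub> y j) \<oplus>\<^bsub>R\<^esub> mu (pair_sum I c x y)"
    using insert by (auto simp: mu_add mu_smult mu_dlt FS_smult FS_dlt FS_pair_sum)
  then show ?case
    using insert by (simp add: ringR.finsum_insert)
qed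

lemma mu_mult_left:
  assumes f: "f \<in> FS" and a: "a \<in> carrier R"
  shows "mu (pair_sum (supp f) f (\<lambda>q. a \<otimes>\<^bsub>R\<^esub> fst q) snd) = a \<otimes>\<^bsub>R\<^esub> mu f"
proof -
  have c: "\<And>q. q \<in> supp f \<Longrightarrow> fst q \<in> carrier R \<and> snd q \<in> carrier R"
    using FS_supp_closed[OF f] by auto
  have "mu (pair_sum (supp f) f (\<lambda>q. a \<otimes>\<^bsub>R\<^esub> fst q) snd) =
      finsum R (\<lambda>q. a \<otimes>\<^bsub>R\<^esub> (f q \<odot>\<^bsub>R\<^esub> (fst q \<otimes>\<^bsub>R\<^esub> snd q))) (supp f)"
    using f a c by (auto simp: mu_pair_sum FS_finite sm_mult_right ringR.m_assoc
        intro!: ringR.finsum_cong')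
  also have "\<dots> = a \<otimes>\<^bsub>R\<^esub> mu f"
    unfolding mu_def using f a c by (intro ringR.finsum_rdistr[symmetric]) (auto simp: FS_finite)
  finally show ?thesis .
qed

lemma mu_mult_right:
  assumes f: "f \<in> FS" and a: "a \<in> carrier R"
  shows "mu (pair_sum (supp f) f fst (\<lambda>q. snd q \<otimes>\<^bsub>R\<^esub> a)) = mu f \<otimes>\<^bsub>R\<^esub> a"
proof -
  have c: "\<And>q. q \<in> supp f \<Longrightarrow> fst q \<in> carrier R \<and> snd q \<in> carrier R"
    using FS_supp_closed[OF f] by auto
  have "mu (pair_sum (supp f) f fst (\<lambda>q. snd q \<otimes>\<^bsub>R\<^esub> a)) =
      finsum R (\<lambda>q. (f q \<odot>\<^bsub>R\<^esub> (fst q \<otimes>\<^bsub>R\<^esub> snd q)) \<otimes>\<^bsub>R\<^esub> a) (supp f)"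
    using f a c by (auto simp: mu_pair_sum FS_finite sm_mult_left ringR.m_assoc
        intro!: ringR.finsum_cong')
  also have "\<dots> = mu f \<otimes>\<^bsub>R\<^esub> a"
    unfolding mu_def using f a c by (intro ringR.finsum_ldistr[symmetric]) (auto simp: FS_finite)
  finally show ?thesis .
qed

lemma ER_cls: "f \<in> FS \<Longrightarrow> ER (cls f) = lam \<odot>\<^bsub>R\<^esub> mu f"
  unfolding bc_cond_def mu_def[symmetric]
  using rep_cls[of f] by (simp add: mu_eqv eqv_sym)

lemma ER_closed: "U \<in> carrier R1 \<Longrightarrow> ER U \<in> carrier R"
  by (elim carrier_R1E) (simp add: ER_cls mu_closed)

lemma ER_add: "U \<in> carrier R1 \<Longrightarrow> V \<in> carrier R1 \<Longrightarrow> ER (U \<oplus>\<^bsub>R1\<^esub> V) = ER U \<oplus>\<^bsub>R\<^esub> ER V"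
  by (elim carrier_R1E) (simp add: add_R1 ER_cls FS_add mu_add sm_rdistr mu_closed)

lemma ER_zero: "ER \<zero>\<^bsub>R1\<^esub> = \<zero>\<^bsub>R\<^esub>"
  by (simp add: zero_R1 ER_cls mu_def supp_def)

lemma ER_one: "ER \<one>\<^bsub>R1\<^esub> = \<one>\<^bsub>R\<^esub>"
proof -
  have "mu unit_f = finsum R (\<lambda>i. 1 \<odot>\<^bsub>R\<^esub> (r i \<otimes>\<^bsub>R\<^esub> s i)) {..<n}"
    unfolding unit_f_pair_sum by (rule mu_pair_sum) auto
  also have "\<dots> = inverse lam \<odot>\<^bsub>R\<^esub> \<one>\<^bsub>R\<^esub>"
    using rs_sum by (subst ringR.finsum_cong'[of _ _ "\<lambda>i. r i \<otimes>\<^bsub>R\<^esub> s i"]) auto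
  finally show ?thesis
    by (simp add: one_R1 ER_cls unit_f_FS sm_inverse_lam)
qed

lemma ER_finsum:
  "finite T \<Longrightarrow> F \<in> T \<rightarrow> carrier R1 \<Longrightarrow> ER (finsum R1 F T) = finsum R (\<lambda>t. ER (F t)) T"
proof (induction T rule: finite_induct)
  case empty
  then show ?case
    by (simp add: ER_zero)
next
  case (insert x T)
  then show ?case
    by (simp add: ringR1.finsum_insert ringR.finsum_insert ER_add ringR1.finsum_closed
        ER_closed Pi_iff)
qed

lemma ER_incl_mult:
  assumes a: "a \<in> carrier R" and U: "U \<in> carrier R1"
  shows "ER (\<iota> a \<otimes>\<^bsub>R1\<^esub> U) = a \<otimes>\<^bsub>R\<^esub> ER U"
  using U
proof (elim carrier_R1E)
  fix f assume f: "f \<in> FS" and Uf: "U = cls f"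
  have "pair_sum (supp f) f (\<lambda>q. a \<otimes>\<^bsub>R\<^esub> fst q) snd \<in> FS"
    using f a FS_supp_closed[OF f] by (intro FS_pair_sum) (auto simp: FS_finite)
  then show ?thesis
    using f a by (simp add: Uf incl_mult_cls ER_cls mu_mult_left sm_mult_right mu_closed)
qed

lemma ER_mult_incl:
  assumes a: "a \<in> carrier R" and U: "U \<in> carrier R1"
  shows "ER (U \<otimes>\<^bsub>R1\<^esub> \<iota> a) = ER U \<otimes>\<^bsub>R\<^esub> a"
  using U
proof (elim carrier_R1E)
  fix f assume f: "f \<in> FS" and Uf: "U = cls f"
  have "pair_sum (supp f) f fst (\<lambda>q. snd q \<otimes>\<^bsub>R\<^esub> a) \<in> FS"
    using f a FS_supp_closed[OF f] by (intro FS_pair_sum) (auto simp: FS_finite)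
  then show ?thesis
    using f a by (simp add: Uf cls_mult_incl ER_cls mu_mult_right sm_mult_left mu_closed)
qed

section \<open>The basic construction is again strongly separable\<close>

definition r1 :: "nat \<Rightarrow> ('a \<times> 'a \<Rightarrow> 'k) set" where
  "r1 i = cls (dlt (inverse lam \<odot>\<^bsub>R\<^esub> r i) \<one>\<^bsub>R\<^esub>)"

definition s1 :: "nat \<Rightarrow> ('a \<times> 'a \<Rightarrow> 'k) set" where
  "s1 i = cls (dlt \<one>\<^bsub>R\<^esub> (s i))"

lemma r1_closed: "i < n \<Longrightarrow> r1 i \<in> carrier R1"
  by (simp add: r1_def FS_dlt)

lemma s1_closed: "i < n \<Longrightarrow> s1 i \<in> carrier R1"
  by (simp add: s1_def FS_dlt)

lemma finsum_R1_cls: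
  "finite I \<Longrightarrow> (\<And>i. i \<in> I \<Longrightarrow> F i \<in> FS) \<Longrightarrow> finsum R1 (\<lambda>i. cls (F i)) I = cls (\<lambda>p. \<Sum>i\<in>I. F i p)"
proof (induction I rule: finite_induct)
  case empty
  then show ?case
    by (simp add: zero_R1)
next
  case (insert j I)
  then show ?case
    by (simp add: ringR1.finsum_insert add_R1 FS_sum Pi_iff)
qed

lemma eqv_dlt_finsum_smult_left:
  assumes "finite P" "\<And>p. p \<in> P \<Longrightarrow> x p \<in> carrier R" "b \<in> carrier R"
  shows "eqv (dlt (finsum R (\<lambda>p. c p \<odot>\<^bsub>R\<^esub> x p) P) b) (\<lambda>t. \<Sum>p\<in>P. c p * dlt (x p) b t)"
proof -
  have "eqv (dlt (finsum R (\<lambda>p. c p \<odot>\<^bsub>R\<^esub> x p) P) b) (\<lambda>t. \<Sum>p\<in>P. dlt (c p \<odot>\<^bsub>R\<^esub> x p) b t)"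
    using assms by (intro eqv_sym[OF eqv_dlt_sum_left]) auto
  also have "eqv \<dots> (\<lambda>t. \<Sum>p\<in>P. c p * dlt (x p) b t)"
    using assms by (intro eqv_sum eqv_smult_left) auto
  finally show ?thesis .
qed

lemma eqv_dlt_finsum_smult_right:
  assumes "finite P" "\<And>p. p \<in> P \<Longrightarrow> x p \<in> carrier R" "a \<in> carrier R"
  shows "eqv (dlt a (finsum R (\<lambda>p. c p \<odot>\<^bsub>R\<^esub> x p) P)) (\<lambda>t. \<Sum>p\<in>P. c p * dlt a (x p) t)"
proof -
  have "eqv (dlt a (finsum R (\<lambda>p. c p \<odot>\<^bsub>R\<^esub> x p) P)) (\<lambda>t. \<Sum>p\<in>P. dlt a (c p \<odot>\<^bsub>R\<^esub> x p) t)"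
    using assms by (intro eqv_sym[OF eqv_dlt_sum_right]) auto
  also have "eqv \<dots> (\<lambda>t. \<Sum>p\<in>P. c p * dlt a (x p) t)"
    using assms by (intro eqv_sum eqv_smult_right) auto
  finally show ?thesis .
qed

lemma ER_mult_r1:
  assumes f: "f \<in> FS" and i: "i < n"
  shows "ER (cls f \<otimes>\<^bsub>R1\<^esub> r1 i) = finsum R (\<lambda>p. f p \<odot>\<^bsub>R\<^esub> (fst p \<otimes>\<^bsub>R\<^esub> E (snd p \<otimes>\<^bsub>R\<^esub> r i))) (supp f)"
proof -
  have c: "\<And>q. q \<in> supp f \<Longrightarrow> fst q \<in> carrier R \<and> snd q \<in> carrier R"
    using f FS_supp_closed by auto
  let ?x = "inverse lam \<odot>\<^bsub>R\<^esub> r i"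
  let ?g = "pair_sum (supp f) f (\<lambda>p. fst p \<otimes>\<^bsub>R\<^esub> E (snd p \<otimes>\<^bsub>R\<^esub> ?x)) (\<lambda>_. \<one>\<^bsub>R\<^esub>)"
  have "cls f \<otimes>\<^bsub>R1\<^esub> r1 i = cls ?g"
    unfolding r1_def using f i by (simp add: mult_R1 FS_dlt fmult_dlt_right pair_sum_def)
  then have "ER (cls f \<otimes>\<^bsub>R1\<^esub> r1 i) =
      lam \<odot>\<^bsub>R\<^esub> finsum R (\<lambda>p. f p \<odot>\<^bsub>R\<^esub> (fst p \<otimes>\<^bsub>R\<^esub> E (snd p \<otimes>\<^bsub>R\<^esub> ?x) \<otimes>\<^bsub>R\<^esub> \<one>\<^bsub>R\<^esub>)) (supp f)"
    using f c i by (simp add: ER_cls mu_pair_sum FS_pair_sum FS_finite)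
  also have "\<dots> = lam \<odot>\<^bsub>R\<^esub> finsum R (\<lambda>p. inverse lam \<odot>\<^bsub>R\<^esub>
      (f p \<odot>\<^bsub>R\<^esub> (fst p \<otimes>\<^bsub>R\<^esub> E (snd p \<otimes>\<^bsub>R\<^esub> r i)))) (supp f)"
    using c i by (intro arg_cong[where f="\<lambda>z. lam \<odot>\<^bsub>R\<^esub> z"] ringR.finsum_cong')
      (auto simp: sm_mult_right E_smult sm_assoc[symmetric] mult.commute)
  also have "\<dots> = finsum R (\<lambda>p. f p \<odot>\<^bsub>R\<^esub> (fst p \<otimes>\<^bsub>R\<^esub> E (snd p \<otimes>\<^bsub>R\<^esub> r i))) (supp f)"
    using c i f by (subst modR.finsum_smult_ldistr[symmetric])
      (auto simp: FS_finite intro!: sm_inverse_lam ringR.finsum_closed)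
  finally show ?thesis .
qed

lemma ER_s1_mult:
  assumes f: "f \<in> FS" and i: "i < n"
  shows "ER (s1 i \<otimes>\<^bsub>R1\<^esub> cls f) =
    lam \<odot>\<^bsub>R\<^esub> finsum R (\<lambda>q. f q \<odot>\<^bsub>R\<^esub> (E (s i \<otimes>\<^bsub>R\<^esub> fst q) \<otimes>\<^bsub>R\<^esub> snd q)) (supp f)"
proof -
  have c: "\<And>q. q \<in> supp f \<Longrightarrow> fst q \<in> carrier R \<and> snd q \<in> carrier R"
    using f FS_supp_closed by auto
  let ?g = "pair_sum (supp f) f (\<lambda>q. \<one>\<^bsub>R\<^esub> \<otimes>\<^bsub>R\<^esub> E (s i \<otimes>\<^bsub>R\<^esub> fst q)) snd"
  have "s1 i \<otimes>\<^bsub>R1\<^esub> cls f = cls ?g"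
    unfolding s1_def using f i by (simp add: mult_R1 FS_dlt fmult_dlt_left pair_sum_def)
  then have "ER (s1 i \<otimes>\<^bsub>R1\<^esub> cls f) =
      lam \<odot>\<^bsub>R\<^esub> finsum R (\<lambda>q. f q \<odot>\<^bsub>R\<^esub> ((\<one>\<^bsub>R\<^esub> \<otimes>\<^bsub>R\<^esub> E (s i \<otimes>\<^bsub>R\<^esub> fst q)) \<otimes>\<^bsub>R\<^esub> snd q)) (supp f)"
    using f c i by (simp add: ER_cls mu_pair_sum FS_pair_sum FS_finite)
  also have "\<dots> = lam \<odot>\<^bsub>R\<^esub> finsum R (\<lambda>q. f q \<odot>\<^bsub>R\<^esub> (E (s i \<otimes>\<^bsub>R\<^esub> fst q) \<otimes>\<^bsub>R\<^esub> snd q)) (supp f)"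
    using c i by (intro arg_cong[where f="\<lambda>z. lam \<odot>\<^bsub>R\<^esub> z"] ringR.finsum_cong') auto
  finally show ?thesis .
qed

lemma eqv_dual1_R1:
  assumes f: "f \<in> FS"
  shows "eqv (\<lambda>t. \<Sum>i<n. dlt (finsum R (\<lambda>p. f p \<odot>\<^bsub>R\<^esub> (fst p \<otimes>\<^bsub>R\<^esub> E (snd p \<otimes>\<^bsub>R\<^esub> r i))) (supp f)) (s i) t) f"
proof -
  have c: "\<And>q. q \<in> supp f \<Longrightarrow> fst q \<in> carrier R \<and> snd q \<in> carrier R"
    using f FS_supp_closed by auto
  have "eqv (\<lambda>t. \<Sum>i<n. dlt (finsum R (\<lambda>p. f p \<odot>\<^bsub>R\<^esub> (fst p \<otimes>\<^bsub>R\<^esub> E (snd p \<otimes>\<^bsub>R\<^esub> r i))) (supp f)) (s i) t)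
      (\<lambda>t. \<Sum>i<n. \<Sum>p\<in>supp f. f p * dlt (fst p \<otimes>\<^bsub>R\<^esub> E (snd p \<otimes>\<^bsub>R\<^esub> r i)) (s i) t)"
    using f c by (intro eqv_sum eqv_dlt_finsum_smult_left) (auto simp: FS_finite)
  also have "\<dots> = (\<lambda>t. \<Sum>p\<in>supp f. f p * (\<Sum>i<n. dlt (fst p \<otimes>\<^bsub>R\<^esub> E (snd p \<otimes>\<^bsub>R\<^esub> r i)) (s i) t))"
    by (rule ext, subst sum.swap) (simp add: sum_distrib_left)
  also have "eqv \<dots> (\<lambda>t. \<Sum>p\<in>supp f. f p * dlt (fst p) (snd p) t)"
    using f c eqv_sum_dual1[of _ _ "\<one>\<^bsub>R\<^esub>"] by (intro eqv_sum eqv_smult) (auto simp: FS_finite)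
  also have "\<dots> = f"
    using f by (simp add: pair_sum_supp_expanded FS_finite)
  finally show ?thesis .
qed

lemma dual1_R1:
  assumes U: "U \<in> carrier R1"
  shows "finsum R1 (\<lambda>i. (\<iota> \<circ> ER) (U \<otimes>\<^bsub>R1\<^esub> r1 i) \<otimes>\<^bsub>R1\<^esub> s1 i) {..<n} = U"
  using U
proof (elim carrier_R1E)
  fix f assume f: "f \<in> FS" and Uf: "U = cls f"
  define m where "m i = finsum R (\<lambda>p. f p \<odot>\<^bsub>R\<^esub> (fst p \<otimes>\<^bsub>R\<^esub> E (snd p \<otimes>\<^bsub>R\<^esub> r i))) (supp f)" for i
  have m: "i < n \<Longrightarrow> m i \<in> carrier R" for i
    unfolding m_def using FS_supp_closed[OF f] by (intro ringR.finsum_closed) auto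
  have "finsum R1 (\<lambda>i. (\<iota> \<circ> ER) (U \<otimes>\<^bsub>R1\<^esub> r1 i) \<otimes>\<^bsub>R1\<^esub> s1 i) {..<n} =
      finsum R1 (\<lambda>i. cls (dlt (m i) (s i))) {..<n}"
    using m by (intro ringR1.finsum_cong')
      (auto simp: Uf ER_mult_r1[OF f] m_def[symmetric] s1_def incl_mult_dlt FS_dlt)
  also have "\<dots> = cls (\<lambda>t. \<Sum>i<n. dlt (m i) (s i) t)"
    using m by (intro finsum_R1_cls) (auto simp: FS_dlt)
  also have "\<dots> = U"
    unfolding Uf m_def using f FS_supp_closed[OF f] eqv_dual1_R1[OF f]
    by (intro cls_eqI FS_sum FS_dlt ringR.finsum_closed) auto
  finally show ?thesis .
qed

lemma eqv_dual2_R1: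
  assumes f: "f \<in> FS"
  shows "eqv (\<lambda>t. \<Sum>i<n. dlt (inverse lam \<odot>\<^bsub>R\<^esub> r i)
    (lam \<odot>\<^bsub>R\<^esub> finsum R (\<lambda>q. f q \<odot>\<^bsub>R\<^esub> (E (s i \<otimes>\<^bsub>R\<^esub> fst q) \<otimes>\<^bsub>R\<^esub> snd q)) (supp f)) t) f"
    (is "eqv (\<lambda>t. \<Sum>i<n. dlt (inverse lam \<odot>\<^bsub>R\<^esub> r i) (lam \<odot>\<^bsub>R\<^esub> ?w i) t) f")
proof -
  have c: "\<And>q. q \<in> supp f \<Longrightarrow> fst q \<in> carrier R \<and> snd q \<in> carrier R"
    using f FS_supp_closed by auto
  have w: "i < n \<Longrightarrow> ?w i \<in> carrier R" for i
    using c by (intro ringR.finsum_closed) auto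
  have "eqv (\<lambda>t. \<Sum>i<n. dlt (inverse lam \<odot>\<^bsub>R\<^esub> r i) (lam \<odot>\<^bsub>R\<^esub> ?w i) t) (\<lambda>t. \<Sum>i<n. dlt (r i) (?w i) t)"
  proof (intro eqv_sum)
    fix i assume "i \<in> {..<n}"
    then have i: "i < n" by simp
    have "eqv (dlt (inverse lam \<odot>\<^bsub>R\<^esub> r i) (lam \<odot>\<^bsub>R\<^esub> ?w i))
        (\<lambda>t. inverse lam * dlt (r i) (lam \<odot>\<^bsub>R\<^esub> ?w i) t)"
      using i w[OF i] by (intro eqv_smult_left) auto
    also have "eqv \<dots> (\<lambda>t. inverse lam * (lam * dlt (r i) (?w i) t))"
      using i w[OF i] by (intro eqv_smult eqv_smult_right) auto
    finally show "eqv (dlt (inverse lam \<odot>\<^bsub>R\<^esub> r i) (lam \<odot>\<^bsub>R\<^esub> ?w i)) (dlt (r i) (?w i))"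
      using lam_nz by (simp add: mult.assoc[symmetric])
  qed simp
  also have "eqv \<dots> (\<lambda>t. \<Sum>i<n. \<Sum>q\<in>supp f. f q * dlt (r i) (E (s i \<otimes>\<^bsub>R\<^esub> fst q) \<otimes>\<^bsub>R\<^esub> snd q) t)"
    using f c by (intro eqv_sum eqv_dlt_finsum_smult_right) (auto simp: FS_finite)
  also have "eqv \<dots> (\<lambda>t. \<Sum>i<n. \<Sum>q\<in>supp f. f q * dlt (r i \<otimes>\<^bsub>R\<^esub> E (s i \<otimes>\<^bsub>R\<^esub> fst q)) (snd q) t)"
    using f c E_in_S by (intro eqv_sum eqv_smult eqv_sym[OF eqv_balanced]) (auto simp: FS_finite)
  also have "\<dots> = (\<lambda>t. \<Sum>q\<in>supp f. f q * (\<Sum>i<n. dlt (r i \<otimes>\<^bsub>R\<^esub> E (s i \<otimes>\<^bsub>R\<^esub> fst q)) (snd q) t))"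
    by (rule ext, subst sum.swap) (simp add: sum_distrib_left)
  also have "eqv \<dots> (\<lambda>t. \<Sum>q\<in>supp f. f q * dlt (fst q) (snd q) t)"
    using f c eqv_sum_dual2[of _ _ "\<one>\<^bsub>R\<^esub>"] by (intro eqv_sum eqv_smult) (auto simp: FS_finite)
  also have "\<dots> = f"
    using f by (simp add: pair_sum_supp_expanded FS_finite)
  finally show ?thesis .
qed

lemma dual2_R1:
  assumes U: "U \<in> carrier R1"
  shows "finsum R1 (\<lambda>i. r1 i \<otimes>\<^bsub>R1\<^esub> (\<iota> \<circ> ER) (s1 i \<otimes>\<^bsub>R1\<^esub> U)) {..<n} = U"
  using U
proof (elim carrier_R1E)
  fix f assume f: "f \<in> FS" and Uf: "U = cls f"
  define w where "w i = lam \<odot>\<^bsub>R\<^esub> finsum R (\<lambda>q. f q \<odot>\<^bsub>R\<^esub> (E (s i \<otimes>\<^bsub>R\<^esub> fst q) \<otimes>\<^bsub>R\<^esub> snd q)) (supp f)" for i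
  have w: "i < n \<Longrightarrow> w i \<in> carrier R" for i
    unfolding w_def using FS_supp_closed[OF f] by (intro sm_closed ringR.finsum_closed) auto
  have "finsum R1 (\<lambda>i. r1 i \<otimes>\<^bsub>R1\<^esub> (\<iota> \<circ> ER) (s1 i \<otimes>\<^bsub>R1\<^esub> U)) {..<n} =
      finsum R1 (\<lambda>i. cls (dlt (inverse lam \<odot>\<^bsub>R\<^esub> r i) (w i))) {..<n}"
    using w by (intro ringR1.finsum_cong')
      (auto simp: Uf ER_s1_mult[OF f] w_def[symmetric] r1_def dlt_mult_incl FS_dlt)
  also have "\<dots> = cls (\<lambda>t. \<Sum>i<n. dlt (inverse lam \<odot>\<^bsub>R\<^esub> r i) (w i) t)"
    using w by (intro finsum_R1_cls) (auto simp: FS_dlt)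
  also have "\<dots> = U"
    unfolding Uf w_def using f FS_supp_closed[OF f] eqv_dual2_R1[OF f]
    by (intro cls_eqI FS_sum FS_dlt sm_closed ringR.finsum_closed) auto
  finally show ?thesis .
qed

lemma rs_sum_R1: "finsum R1 (\<lambda>i. r1 i \<otimes>\<^bsub>R1\<^esub> s1 i) {..<n} = inverse lam \<odot>\<^bsub>R1\<^esub> \<one>\<^bsub>R1\<^esub>"
proof -
  have "finsum R1 (\<lambda>i. r1 i \<otimes>\<^bsub>R1\<^esub> s1 i) {..<n} =
      finsum R1 (\<lambda>i. cls (dlt (inverse lam \<odot>\<^bsub>R\<^esub> r i) (s i))) {..<n}"
    by (intro ringR1.finsum_cong') (auto simp: r1_def s1_def mult_R1 FS_dlt fmult_dlt_dlt E_one)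
  also have "\<dots> = cls (\<lambda>t. \<Sum>i<n. dlt (inverse lam \<odot>\<^bsub>R\<^esub> r i) (s i) t)"
    by (intro finsum_R1_cls) (auto simp: FS_dlt)
  also have "\<dots> = cls (\<lambda>p. inverse lam * unit_f p)"
  proof (rule cls_eqI)
    have "eqv (\<lambda>t. \<Sum>i<n. dlt (inverse lam \<odot>\<^bsub>R\<^esub> r i) (s i) t) (\<lambda>t. \<Sum>i<n. inverse lam * dlt (r i) (s i) t)"
      by (intro eqv_sum eqv_smult_left) auto
    then show "eqv (\<lambda>t. \<Sum>i<n. dlt (inverse lam \<odot>\<^bsub>R\<^esub> r i) (s i) t) (\<lambda>p. inverse lam * unit_f p)"
      by (simp add: unit_f_def sum_distrib_left)
  qed (auto intro!: FS_sum FS_dlt FS_smult unit_f_FS)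
  also have "\<dots> = inverse lam \<odot>\<^bsub>R1\<^esub> \<one>\<^bsub>R1\<^esub>"
    by (simp add: one_R1 smult_R1 unit_f_FS)
  finally show ?thesis .
qed

lemma subalg_incl: "subalg (\<iota> ` carrier R) R1"
  unfolding subalg_def
proof (intro conjI ballI allI)
  show "\<iota> ` carrier R \<subseteq> carrier R1"
    using incl_closed by auto
  show "\<one>\<^bsub>R1\<^esub> \<in> \<iota> ` carrier R"
    using incl_one by (metis ringR.one_closed image_eqI)
  show "\<zero>\<^bsub>R1\<^esub> \<in> \<iota> ` carrier R"
    using incl_zero by (metis ringR.zero_closed image_eqI)
  fix a b assume "a \<in> \<iota> ` carrier R" "b \<in> \<iota> ` carrier R"
  then show "a \<oplus>\<^bsub>R1\<^esub> b \<in> \<iota> ` carrier R" "a \<otimes>\<^bsub>R1\<^esub> b \<in> \<iota> ` carrier R"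
    by (auto simp: incl_add incl_mult)
next
  fix c a assume "a \<in> \<iota> ` carrier R"
  then show "c \<odot>\<^bsub>R1\<^esub> a \<in> \<iota> ` carrier R"
    by (auto simp: incl_smult)
qed

theorem strongly_separable_ext_R1: "strongly_separable_ext R1 (\<iota> ` carrier R) (\<iota> \<circ> ER) r1 s1 n lam"
proof
  show "\<forall>a\<in>\<iota> ` carrier R. \<forall>m\<in>carrier R1. (\<iota> \<circ> ER) (a \<otimes>\<^bsub>R1\<^esub> m) = a \<otimes>\<^bsub>R1\<^esub> (\<iota> \<circ> ER) m \<and>
      (\<iota> \<circ> ER) (m \<otimes>\<^bsub>R1\<^esub> a) = (\<iota> \<circ> ER) m \<otimes>\<^bsub>R1\<^esub> a"
    by (auto simp: ER_incl_mult ER_mult_incl ER_closed incl_mult)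
  show "\<forall>m\<in>carrier R1. finsum R1 (\<lambda>i. (\<iota> \<circ> ER) (m \<otimes>\<^bsub>R1\<^esub> r1 i) \<otimes>\<^bsub>R1\<^esub> s1 i) {..<n} = m"
    using dual1_R1 by blast
  show "\<forall>m\<in>carrier R1. finsum R1 (\<lambda>i. r1 i \<otimes>\<^bsub>R1\<^esub> (\<iota> \<circ> ER) (s1 i \<otimes>\<^bsub>R1\<^esub> m)) {..<n} = m"
    using dual2_R1 by blast
qed (simp_all add: kalg_R1 subalg_incl ER_closed ER_add incl_add r1_closed s1_closed
    ER_one incl_one lam_nz rs_sum_R1)

section \<open>Faithfulness of \<open>E\<^sub>R\<close>\<close>

lemma ER_faithful:
  assumes w: "w \<in> carrier R1" and zero: "\<And>u. u \<in> carrier R1 \<Longrightarrow> ER (w \<otimes>\<^bsub>R1\<^esub> u) = \<zero>\<^bsub>R\<^esub>"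
  shows "w = \<zero>\<^bsub>R1\<^esub>"
proof -
  have "w = finsum R1 (\<lambda>i. (\<iota> \<circ> ER) (w \<otimes>\<^bsub>R1\<^esub> r1 i) \<otimes>\<^bsub>R1\<^esub> s1 i) {..<n}"
    using dual1_R1[OF w] by simp
  also have "\<dots> = finsum R1 (\<lambda>i. \<zero>\<^bsub>R1\<^esub>) {..<n}"
    using zero r1_closed s1_closed by (intro ringR1.finsum_cong') (auto simp: incl_zero)
  finally show ?thesis
    by simp
qed

text \<open>Since \<open>E\<^sub>R\<close> is right \<open>R\<close>-linear, it suffices to test faithfulness against a basis of
  \<open>R\<^sub>1\<close> as a right \<open>R\<close>-module.\<close>

lemma ER_faithful_on_basis:
  assumes B: "free_right_basis R1 R \<iota> Bs" and w: "w \<in> carrier R1"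
    and zero: "\<And>b. b \<in> Bs \<Longrightarrow> ER (w \<otimes>\<^bsub>R1\<^esub> b) = \<zero>\<^bsub>R\<^esub>"
  shows "w = \<zero>\<^bsub>R1\<^esub>"
proof (rule ER_faithful[OF w])
  fix u assume u: "u \<in> carrier R1"
  obtain g where g: "g \<in> Bs \<rightarrow>\<^sub>E carrier R" "finite {b\<in>Bs. g b \<noteq> \<zero>\<^bsub>R\<^esub>}"
    "u = finsum R1 (\<lambda>b. b \<otimes>\<^bsub>R1\<^esub> \<iota> (g b)) {b\<in>Bs. g b \<noteq> \<zero>\<^bsub>R\<^esub>}"
    using free_right_basisE[OF B u] by blast
  let ?T = "{b\<in>Bs. g b \<noteq> \<zero>\<^bsub>R\<^esub>}"
  have T: "\<And>b. b \<in> ?T \<Longrightarrow> g b \<in> carrier R \<and> b \<in> carrier R1"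
    using g(1) B by (auto simp: free_right_basis_def)
  have "w \<otimes>\<^bsub>R1\<^esub> u = finsum R1 (\<lambda>b. w \<otimes>\<^bsub>R1\<^esub> (b \<otimes>\<^bsub>R1\<^esub> \<iota> (g b))) ?T"
    unfolding g(3) using g(2) w T incl_closed by (intro ringR1.finsum_rdistr) auto
  then have "ER (w \<otimes>\<^bsub>R1\<^esub> u) = finsum R (\<lambda>b. ER (w \<otimes>\<^bsub>R1\<^esub> (b \<otimes>\<^bsub>R1\<^esub> \<iota> (g b)))) ?T"
    using g(2) w T incl_closed by (simp add: ER_finsum Pi_iff)
  also have "\<dots> = finsum R (\<lambda>b. \<zero>\<^bsub>R\<^esub>) ?T"
    using w T zero incl_closed
    by (intro ringR.finsum_cong') (auto simp: ER_mult_incl ringR1.m_assoc[symmetric])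
  finally show "ER (w \<otimes>\<^bsub>R1\<^esub> u) = \<zero>\<^bsub>R\<^esub>"
    by simp
qed

abbreviation "R2 \<equiv> basic_constr R1 (\<iota> ` carrier R) (\<iota> \<circ> ER) r1 s1 n"
abbreviation "\<iota>2 \<equiv> bc_incl R1 (\<iota> ` carrier R) r1 s1 n"
abbreviation "ER1 \<equiv> bc_cond R1 lam"

lemma ER_ER1_centralizer:
  assumes c: "c \<in> alg_centralizer R2 (\<iota>2 ` \<iota> ` S)"
  shows "ER (ER1 c) \<in> alg_centralizer R S"
proof -
  interpret R1: strongly_separable_ext R1 "\<iota> ` carrier R" "\<iota> \<circ> ER" r1 s1 n lam
    by (rule strongly_separable_ext_R1)
  have c2: "c \<in> carrier R2"
    using c by (simp add: alg_centralizer_def)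
  have "a \<otimes>\<^bsub>R\<^esub> ER (ER1 c) = ER (ER1 c) \<otimes>\<^bsub>R\<^esub> a" if a: "a \<in> S" for a
  proof -
    have a1: "a \<in> carrier R"
      using a S_subset by auto
    have "a \<otimes>\<^bsub>R\<^esub> ER (ER1 c) = ER (ER1 (\<iota>2 (\<iota> a) \<otimes>\<^bsub>R2\<^esub> c))"
      using a1 c2 by (simp add: ER_incl_mult R1.ER_incl_mult R1.ER_closed incl_closed)
    also have "\<dots> = ER (ER1 (c \<otimes>\<^bsub>R2\<^esub> \<iota>2 (\<iota> a)))"
      using c a by (simp add: alg_centralizer_def)
    also have "\<dots> = ER (ER1 c) \<otimes>\<^bsub>R\<^esub> a"
      using a1 c2 by (simp add: ER_mult_incl R1.ER_mult_incl R1.ER_closed incl_closed)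
    finally show ?thesis .
  qed
  then show ?thesis
    using c2 by (simp add: alg_centralizer_def R1.ER_closed ER_closed)
qed

text \<open>Products of elements of \<open>B = C\<^sub>R\<^sub>2(R)\<close> and \<open>A = C\<^sub>R\<^sub>1(S)\<close> lie in \<open>C = C\<^sub>R\<^sub>2(S)\<close>;
  this is how the depth two bases enter the faithfulness argument.\<close>

lemma centralizer_mult_incl:
  assumes \<beta>: "\<beta> \<in> alg_centralizer R2 (\<iota>2 ` \<iota> ` carrier R)" and b: "b \<in> alg_centralizer R1 (\<iota> ` S)"
  shows "\<beta> \<otimes>\<^bsub>R2\<^esub> \<iota>2 b \<in> alg_centralizer R2 (\<iota>2 ` \<iota> ` S)"
proof -
  interpret R1: strongly_separable_ext R1 "\<iota> ` carrier R" "\<iota> \<circ> ER" r1 s1 n lam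
    by (rule strongly_separable_ext_R1)
  have \<beta>2: "\<beta> \<in> carrier R2" and b1: "b \<in> carrier R1"
    using \<beta> b by (auto simp: alg_centralizer_def)
  have "\<beta> \<otimes>\<^bsub>R2\<^esub> \<iota>2 b \<otimes>\<^bsub>R2\<^esub> \<iota>2 (\<iota> a) = \<iota>2 (\<iota> a) \<otimes>\<^bsub>R2\<^esub> (\<beta> \<otimes>\<^bsub>R2\<^esub> \<iota>2 b)" if a: "a \<in> S" for a
  proof -
    have a1: "a \<in> carrier R"
      using a S_subset by auto
    have "\<iota>2 b \<otimes>\<^bsub>R2\<^esub> \<iota>2 (\<iota> a) = \<iota>2 (\<iota> a) \<otimes>\<^bsub>R2\<^esub> \<iota>2 b"
      using a b a1 b1 by (simp add: R1.incl_mult incl_closed alg_centralizer_def)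
    moreover have "\<beta> \<otimes>\<^bsub>R2\<^esub> \<iota>2 (\<iota> a) = \<iota>2 (\<iota> a) \<otimes>\<^bsub>R2\<^esub> \<beta>"
      using \<beta> a1 by (simp add: alg_centralizer_def)
    ultimately show ?thesis
      using \<beta>2 b1 a1
      by (simp add: R1.ringR1.m_assoc R1.incl_closed incl_closed)
        (simp add: R1.ringR1.m_assoc[symmetric] R1.incl_closed incl_closed)
  qed
  then show ?thesis
    using \<beta>2 b1 by (auto simp: alg_centralizer_def R1.incl_closed)
qed

lemma ER_ER1_faithful:
  assumes B1: "Bs1 \<subseteq> alg_centralizer R1 (\<iota> ` S)" "free_right_basis R1 R \<iota> Bs1"
    and B2: "Bs2 \<subseteq> alg_centralizer R2 (\<iota>2 ` \<iota> ` carrier R)" "free_right_basis R2 R1 \<iota>2 Bs2"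
    and c: "c \<in> alg_centralizer R2 (\<iota>2 ` \<iota> ` S)"
    and zero: "\<forall>c'\<in>alg_centralizer R2 (\<iota>2 ` \<iota> ` S). ER (ER1 (c \<otimes>\<^bsub>R2\<^esub> c')) = \<zero>\<^bsub>R\<^esub>"
  shows "c = \<zero>\<^bsub>R2\<^esub>"
proof -
  interpret R1: strongly_separable_ext R1 "\<iota> ` carrier R" "\<iota> \<circ> ER" r1 s1 n lam
    by (rule strongly_separable_ext_R1)
  have c2: "c \<in> carrier R2"
    using c by (simp add: alg_centralizer_def)
  show ?thesis
  proof (rule R1.ER_faithful_on_basis[OF B2(2) c2])
    fix \<beta> assume \<beta>: "\<beta> \<in> Bs2"
    then have \<beta>2: "\<beta> \<in> carrier R2"
      using B2(1) by (auto simp: alg_centralizer_def)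
    show "ER1 (c \<otimes>\<^bsub>R2\<^esub> \<beta>) = \<zero>\<^bsub>R1\<^esub>"
    proof (rule ER_faithful_on_basis[OF B1(2)])
      show "ER1 (c \<otimes>\<^bsub>R2\<^esub> \<beta>) \<in> carrier R1"
        using c2 \<beta>2 by (simp add: R1.ER_closed)
      fix b assume "b \<in> Bs1"
      then have b: "b \<in> alg_centralizer R1 (\<iota> ` S)" and b1: "b \<in> carrier R1"
        using B1(1) by (auto simp: alg_centralizer_def)
      have "ER (ER1 (c \<otimes>\<^bsub>R2\<^esub> \<beta>) \<otimes>\<^bsub>R1\<^esub> b) = ER (ER1 (c \<otimes>\<^bsub>R2\<^esub> (\<beta> \<otimes>\<^bsub>R2\<^esub> \<iota>2 b)))"
        using c2 \<beta>2 b1 by (simp add: R1.ER_mult_incl R1.ringR1.m_assoc[symmetric] R1.incl_closed)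
      also have "\<dots> = \<zero>\<^bsub>R\<^esub>"
        using zero centralizer_mult_incl[OF _ b] \<beta> B2(1) by blast
      finally show "ER (ER1 (c \<otimes>\<^bsub>R2\<^esub> \<beta>) \<otimes>\<^bsub>R1\<^esub> b) = \<zero>\<^bsub>R\<^esub>" .
    qed
  qed
qed

end

theorem proposition3p8:
  fixes M :: "('k::field, 'a) module"
    and N :: "'a set"
    and E :: "'a \<Rightarrow> 'a"
    and x y :: "nat \<Rightarrow> 'a"
    and n :: nat
    and lam :: 'k
  defines "M1 \<equiv> basic_constr M N E x y n"
    and "\<iota>1 \<equiv> bc_incl M N x y n"
    and "EM \<equiv> bc_cond M lam"
  defines "x1 \<equiv> (\<lambda>i. tens_class M N (dlt (inverse lam \<odot>\<^bsub>M\<^esub> x i) \<one>\<^bsub>M\<^esub>))"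
    and "y1 \<equiv> (\<lambda>i. tens_class M N (dlt \<one>\<^bsub>M\<^esub> (y i)))"
  defines "M2 \<equiv> basic_constr M1 (\<iota>1 ` carrier M) (\<iota>1 \<circ> EM) x1 y1 n"
    and "\<iota>2 \<equiv> bc_incl M1 (\<iota>1 ` carrier M) x1 y1 n"
    and "EM1 \<equiv> bc_cond M1 lam"
  defines "A \<equiv> alg_centralizer M1 (\<iota>1 ` N)"
    and "B \<equiv> alg_centralizer M2 (\<iota>2 ` \<iota>1 ` carrier M)"
    and "C \<equiv> alg_centralizer M2 (\<iota>2 ` \<iota>1 ` N)"
  assumes alg: "kalg M"
    and sub: "subalg N M"
    and irred: "alg_centralizer M N = {c \<odot>\<^bsub>M\<^esub> \<one>\<^bsub>M\<^esub> | c. True}"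
    and E_into: "\<forall>m\<in>carrier M. E m \<in> N"
    and E_add: "\<forall>a\<in>carrier M. \<forall>b\<in>carrier M. E (a \<oplus>\<^bsub>M\<^esub> b) = E a \<oplus>\<^bsub>M\<^esub> E b"
    and E_bimod: "\<forall>a\<in>N. \<forall>m\<in>carrier M.
                    E (a \<otimes>\<^bsub>M\<^esub> m) = a \<otimes>\<^bsub>M\<^esub> E m \<and> E (m \<otimes>\<^bsub>M\<^esub> a) = E m \<otimes>\<^bsub>M\<^esub> a"
    and xy_in: "\<forall>i<n. x i \<in> carrier M \<and> y i \<in> carrier M"
    and dual1: "\<forall>m\<in>carrier M. finsum M (\<lambda>i. E (m \<otimes>\<^bsub>M\<^esub> x i) \<otimes>\<^bsub>M\<^esub> y i) {..<n} = m"
    and dual2: "\<forall>m\<in>carrier M. finsum M (\<lambda>i. x i \<otimes>\<^bsub>M\<^esub> E (y i \<otimes>\<^bsub>M\<^esub> m)) {..<n} = m"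
    and E_one: "E \<one>\<^bsub>M\<^esub> = \<one>\<^bsub>M\<^esub>"
    and lam_nz: "lam \<noteq> 0"
    and xy_sum: "finsum M (\<lambda>i. x i \<otimes>\<^bsub>M\<^esub> y i) {..<n} = inverse lam \<odot>\<^bsub>M\<^esub> \<one>\<^bsub>M\<^esub>"
    and depth2_1: "\<exists>Bs\<subseteq>A. free_right_basis M1 M \<iota>1 Bs"
    and depth2_2: "\<exists>Bs\<subseteq>B. free_right_basis M2 M1 \<iota>2 Bs"
  shows "(\<forall>c\<in>C. \<exists>t. EM (EM1 c) = t \<odot>\<^bsub>M\<^esub> \<one>\<^bsub>M\<^esub>) \<and>
         (\<forall>c\<in>C. (\<forall>c'\<in>C. EM (EM1 (c \<otimes>\<^bsub>M2\<^esub> c')) = \<zero>\<^bsub>M\<^esub>) \<longrightarrow> c = \<zero>\<^bsub>M2\<^esub>)"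
proof -
  interpret M: strongly_separable_ext M N E x y n lam
    using alg sub E_into E_add E_bimod xy_in dual1 dual2 E_one lam_nz xy_sum
    by (rule strongly_separable_ext.intro)
  have "x1 = M.r1" "y1 = M.s1"
    by (simp_all add: fun_eq_iff x1_def y1_def M.r1_def M.s1_def)
  then have M2: "M2 = M.R2" "\<iota>2 = M.\<iota>2"
    by (simp_all add: M2_def \<iota>2_def M1_def \<iota>1_def EM_def)
  obtain Bs1 where Bs1: "Bs1 \<subseteq> A" "free_right_basis M1 M \<iota>1 Bs1"
    using depth2_1 by blast
  obtain Bs2 where Bs2: "Bs2 \<subseteq> B" "free_right_basis M2 M1 \<iota>2 Bs2"
    using depth2_2 by blast
  show ?thesis
  proof (intro conjI ballI impI)
    fix c assume "c \<in> C"
    then have "EM (EM1 c) \<in> alg_centralizer M N"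
      unfolding C_def M2 M1_def \<iota>1_def EM_def EM1_def by (rule M.ER_ER1_centralizer)
    then show "\<exists>t. EM (EM1 c) = t \<odot>\<^bsub>M\<^esub> \<one>\<^bsub>M\<^esub>"
      using irred by blast
  next
    fix c assume "c \<in> C" "\<forall>c'\<in>C. EM (EM1 (c \<otimes>\<^bsub>M2\<^esub> c')) = \<zero>\<^bsub>M\<^esub>"
    with Bs1 Bs2 show "c = \<zero>\<^bsub>M2\<^esub>"
      unfolding A_def B_def C_def M2 M1_def \<iota>1_def EM_def EM1_def
      by (rule M.ER_ER1_faithful)
  qed
qed

end
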